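(* Let $H$ be a real Hilbert space, $A:H\to c_0$ bounded linear with adjoint $A^*:\ell^1\to H$ (identifying $c_0^*=\ell^1$). Let $(H_n)_{n\in\mathbb N}$ be subspaces of $H$ with $\dim H_n=n$ such that the orthogonal projections $P_n$ onto $H_n$ satisfy $P_nv\to v$ for all $v\in H$, and assume $\mathcal N(A)\cap H_n=\{0\}$ for all $n$. Let $f\in H$ be such that $A^*u=f$ has a solution in $\ell^1$, and assume $$\forall z\in H:\quad \inf_{z^n\in H_n}\|A(z-z^n)\|_\infty\to0\ \text{ as } n\to\infty.$$ Then: (a) If for each $n$, $u^{\dagger,n}$ is a solution of $\min\{\|u\|_1: u\in\ell^1,\ \langle z,A^*u\rangle=\langle z,f\rangle\ \forall z\in H_n\}$, then $(u^{\dagger,n})_n$ has a subsequence converging in the $\ell^1$-norm to a solution of $A^*u=f$. (b) Let $n_{AP}:(0,\infty)\to\mathbb N$ satisfy $n_{AP}(\delta)\to\infty$ and $\delta\kappa_{n_{AP}(\delta)}\to0$ as $\delta\to0$. Let $(\delta_m)_m\subset(0,\infty)$ converge to $0$, let $f^{\delta_m}\in H$ with $\|f^{\delta_m}-f\|\le\delta_m$, and let $u^m$ be a solution of $\min\{\|u\|_1: u\in\ell^1,\ \langle z,A^*u\rangle=\langle z,f^{\delta_m}\rangle\ \forall z\in H_{n_{AP}(\delta_m)}\}$. Then there is a subsequence $(u^{l})_l$ of $(u^m)_m$ and a solution $u^\dagger$ of $A^*u=f$ with $\|u^l-u^\dagger\|_1\to0$.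
   Context: $A^*$ is defined by $\langle A^*u,z\rangle=\sum_iu_i(Az)_i$. $\kappa_n=\sup_{z\in H_n\setminus\{0\}}\|z\|/\|Az\|_\infty$. *)

theory Defs
  imports "HOL-Analysis.Analysis"
begin

definition ell1 :: "(nat \<Rightarrow> real) set" where
  "ell1 = {u. summable (\<lambda>i. \<bar>u i\<bar>)}"

definition l1norm :: "(nat \<Rightarrow> real) \<Rightarrow> real" where
  "l1norm u = (\<Sum>i. \<bar>u i\<bar>)"

definition c0 :: "(nat \<Rightarrow> real) set" where
  "c0 = {x. x \<longlonglongrightarrow> 0}"

definition supnorm :: "(nat \<Rightarrow> real) \<Rightarrow> real" where
  "supnorm x = (SUP i. \<bar>x i\<bar>)"

definition bounded_linear_c0 :: "('h::real_normed_vector \<Rightarrow> nat \<Rightarrow> real) \<Rightarrow> bool" where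
  "bounded_linear_c0 A \<longleftrightarrow>
     (\<forall>x y i. A (x + y) i = A x i + A y i) \<and> (\<forall>c x i. A (scaleR c x) i = c * A x i) \<and> (\<forall>z. A z \<in> c0) \<and>
     (\<exists>C. \<forall>z. supnorm (A z) \<le> C * norm z)"

definition adj :: "('h::real_inner \<Rightarrow> nat \<Rightarrow> real) \<Rightarrow> (nat \<Rightarrow> real) \<Rightarrow> 'h" where
  "adj A u = (THE w. \<forall>z. inner w z = (\<Sum>i. u i * A z i))"

definition orth_proj :: "'h::real_inner set \<Rightarrow> 'h \<Rightarrow> 'h" where
  "orth_proj S v = (THE p. p \<in> S \<and> (\<forall>z\<in>S. inner (v - p) z = 0))"

definition kappa :: "('h::real_normed_vector \<Rightarrow> nat \<Rightarrow> real) \<Rightarrow> 'h set \<Rightarrow> real" where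
  "kappa A S = (SUP z\<in>S - {0}. norm z / supnorm (A z))"

definition min_l1_sol ::
  "('h::real_inner \<Rightarrow> nat \<Rightarrow> real) \<Rightarrow> 'h set \<Rightarrow> 'h \<Rightarrow> (nat \<Rightarrow> real) \<Rightarrow> bool" where
  "min_l1_sol A S g u \<longleftrightarrow>
     u \<in> ell1 \<and> (\<forall>z\<in>S. inner z (adj A u) = inner z g) \<and>
     (\<forall>v\<in>ell1. (\<forall>z\<in>S. inner z (adj A v) = inner z g) \<longrightarrow> l1norm u \<le> l1norm v)"

end

theory Submission
  imports Defs "HOL-Library.Diagonal_Subsequence"
begin

text \<open>Every exact solution \<open>u\<^sup>\<dagger>\<close> of \<open>A\<^sup>*u = f\<close> is feasible for the projected problems, so the
  minimizers are bounded by \<open>\<parallel>u\<^sup>\<dagger>\<parallel>\<^sub>1\<close>; with noisy data, an \<open>\<ell>\<^sup>1\<close> correction of norm about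
  \<open>\<delta> \<kappa>\<^sub>n\<close>, produced by a finite-dimensional Hahn--Banach argument, keeps this bound asymptotically.
  A diagonal argument extracts a coordinatewise convergent subsequence; its limit lies in \<open>\<ell>\<^sup>1\<close> by
  Fatou's lemma and solves \<open>A\<^sup>*u = f\<close> because, by the approximation hypothesis on the trial spaces,
  the pairings with every \<open>Az \<in> c\<^sub>0\<close> converge.  Since no limit norm exceeds that of any
  solution, Scheffe's argument upgrades coordinatewise to \<open>\<ell>\<^sup>1\<close>-norm convergence.\<close>

section \<open>Closest points and the Riesz representation\<close>

lemma parallelogram_law_midpoint:
  fixes a x y :: "'a::real_inner"
  shows "norm (x - y)^2 = 2 * norm (a - x)^2 + 2 * norm (a - y)^2 - 4 * norm (a - (1/2) *\<^sub>R (x + y))^2"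
proof -
  have "a - (1/2) *\<^sub>R (x + y) = (1/2) *\<^sub>R ((a - x) + (a - y))"
    by (simp add: algebra_simps flip: scaleR_add_left)
  then show ?thesis
    unfolding power2_norm_eq_inner
    by (simp add: inner_commute algebra_simps)
qed

lemma minimizing_sequence_Cauchy:
  fixes C :: "'a::real_inner set"
  assumes C: "convex C" and X: "\<And>k. X k \<in> C"
    and d: "0 \<le> d" "\<And>x. x \<in> C \<Longrightarrow> d \<le> norm (a - x)"
    and near: "\<And>k. norm (a - X k)^2 \<le> d^2 + e k" and e: "e \<longlonglongrightarrow> 0"
  shows "Cauchy X"
proof (rule metric_CauchyI)
  have gap: "norm (X k - X m)^2 \<le> 2 * e k + 2 * e m" for k m
  proof -
    have "(1/2) *\<^sub>R (X k + X m) \<in> C"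
      using convexD[OF C X X, of "1/2" "1/2"] by (simp add: algebra_simps)
    then have "d^2 \<le> norm (a - (1/2) *\<^sub>R (X k + X m))^2"
      using d by (intro power_mono) auto
    then show ?thesis
      using parallelogram_law_midpoint[of "X k" "X m" a] near[of k] near[of m] by linarith
  qed
  fix \<epsilon> :: real
  assume "\<epsilon> > 0"
  then obtain N where N: "\<And>k. k \<ge> N \<Longrightarrow> \<bar>e k\<bar> < \<epsilon>^2 / 4"
    using LIMSEQ_D[OF e, of "\<epsilon>^2 / 4"] by auto
  show "\<exists>M. \<forall>m\<ge>M. \<forall>n\<ge>M. dist (X m) (X n) < \<epsilon>"
  proof (intro exI allI impI)
    fix m n
    assume "N \<le> m" "N \<le> n"
    then have "norm (X m - X n)^2 < \<epsilon>^2"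
      using gap[of m n] N[of m] N[of n] by linarith
    then show "dist (X m) (X n) < \<epsilon>"
      using power_less_imp_less_base[of _ 2 \<epsilon>] \<open>\<epsilon> > 0\<close> by (simp add: dist_norm)
  qed
qed

lemma closest_point_exists_complete:
  fixes C :: "'a::{real_inner,complete_space} set"
  assumes "closed C" "convex C" "C \<noteq> {}"
  shows "\<exists>p\<in>C. \<forall>x\<in>C. norm (a - p) \<le> norm (a - x)"
proof -
  define d where "d = infdist a C"
  have d0: "0 \<le> d"
    by (simp add: d_def infdist_nonneg)
  have d_le: "d \<le> norm (a - x)" if "x \<in> C" for x
    using infdist_le[OF that, of a] by (simp add: d_def dist_norm)
  have "\<exists>x\<in>C. norm (a - x)^2 \<le> d^2 + 1 / Suc k" for k
  proof -
    have "Inf (dist a ` C) < sqrt (d^2 + 1 / Suc k)"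
      using d0 real_less_lsqrt[of d "d^2 + 1 / Suc k"]  infdist_notempty[OF \<open>C \<noteq> {}\<close>, of a]
      by (simp add: d_def real_less_rsqrt)
    then obtain x where "x \<in> C" "norm (a - x) < sqrt (d^2 + 1 / Suc k)"
      using cInf_lessD[of "dist a ` C"] \<open>C \<noteq> {}\<close> by (auto simp: dist_norm)
    then show ?thesis
      by (metis add_nonneg_nonneg less_eq_real_def norm_ge_zero of_nat_0_le_iff
          power_strict_mono real_sqrt_pow2 zero_le_divide_1_iff zero_le_power2 zero_less_numeral)
  qed
  then obtain X where X: "\<And>k. X k \<in> C" "\<And>k. norm (a - X k)^2 \<le> d^2 + 1 / Suc k"
    by metis
  have e: "(\<lambda>k. 1 / real (Suc k)) \<longlonglongrightarrow> 0"
    by (rule LIMSEQ_Suc[OF lim_1_over_n])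
  have "Cauchy X"
    using minimizing_sequence_Cauchy[OF assms(2) X(1) d0 d_le X(2) e] by blast
  then obtain p where p: "X \<longlonglongrightarrow> p"
    using Cauchy_convergent_iff convergent_def by blast
  have "p \<in> C"
    using closed_sequentially[OF \<open>closed C\<close>] X(1) p by blast
  have "(\<lambda>k. norm (a - X k)^2) \<longlonglongrightarrow> norm (a - p)^2"
    by (intro tendsto_intros p)
  moreover have "(\<lambda>k. d^2 + 1 / Suc k) \<longlonglongrightarrow> d^2"
    using tendsto_add[OF tendsto_const e, of "d^2"] by simp
  ultimately have "norm (a - p)^2 \<le> d^2"
    by (rule LIMSEQ_le) (use X(2) in auto)
  then have "norm (a - p) \<le> d"
    using d0 by (simp add: power2_le_iff_abs_le)
  then show ?thesis
    using \<open>p \<in> C\<close> d_le by force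
qed

lemma closest_point_inner_le:
  fixes K :: "'a::real_inner set"
  assumes cv: "convex K" and p: "p \<in> K" and k: "k \<in> K"
    and min: "\<And>x. x \<in> K \<Longrightarrow> norm (t - p) \<le> norm (t - x)"
  shows "inner (t - p) (k - p) \<le> 0"
proof (rule ccontr)
  define c where "c = t - p"
  define d where "d = k - p"
  assume "\<not> inner (t - p) (k - p) \<le> 0"
  then have a0: "inner c d > 0"
    by (simp add: c_def d_def)
  then have b0: "inner d d > 0"
    by (metis inner_gt_zero_iff inner_zero_right)
  define \<theta> where "\<theta> = min 1 (inner c d / inner d d)"
  have \<theta>: "0 < \<theta>" "\<theta> \<le> 1" "\<theta> * inner d d \<le> inner c d"
    using a0 b0 by (auto simp: \<theta>_def min_def field_simps)
  have "(1 - \<theta>) *\<^sub>R p + \<theta> *\<^sub>R k \<in> K"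
    using convexD[OF cv p k] \<theta> by simp
  then have "norm c \<le> norm (t - ((1 - \<theta>) *\<^sub>R p + \<theta> *\<^sub>R k))"
    unfolding c_def by (rule min)
  also have "t - ((1 - \<theta>) *\<^sub>R p + \<theta> *\<^sub>R k) = c - \<theta> *\<^sub>R d"
    by (simp add: c_def d_def algebra_simps)
  finally have "norm c ^ 2 \<le> norm (c - \<theta> *\<^sub>R d) ^ 2"
    by (simp add: power_mono)
  then have "2 * \<theta> * inner c d \<le> \<theta> * (\<theta> * inner d d)"
    by (simp add: power2_norm_eq_inner inner_commute algebra_simps)
  then show False
    using \<theta> a0 by (simp add: mult.assoc)
qed

lemma riesz_representation:
  fixes \<phi> :: "'a::{real_inner,complete_space} \<Rightarrow> real"
  assumes "bounded_linear \<phi>"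
  shows "\<exists>w. \<forall>z. inner w z = \<phi> z"
proof (cases "\<forall>z. \<phi> z = 0")
  case True
  then show ?thesis
    by (intro exI[of _ 0]) simp
next
  case False
  interpret bounded_linear \<phi> by fact
  obtain x1 where "\<phi> x1 \<noteq> 0"
    using False by blast
  define x0 where "x0 = (1 / \<phi> x1) *\<^sub>R x1"
  have "\<phi> x0 = 1"
    using \<open>\<phi> x1 \<noteq> 0\<close> by (simp add: x0_def scale)
  define C where "C = {x. \<phi> x = 0}"
  have "closed C"
    unfolding C_def by (intro closed_Collect_eq continuous_on_const linear_continuous_on assms)
  moreover have "convex C"
    unfolding C_def convex_def by (simp add: add scale)
  moreover have "C \<noteq> {}"
    unfolding C_def using zero by blast
  ultimately obtain p where p: "p \<in> C" and p_min: "\<And>x. x \<in> C \<Longrightarrow> norm (x0 - p) \<le> norm (x0 - x)"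
    using closest_point_exists_complete[of C x0] by blast
  define y where "y = x0 - p"
  have \<phi>y: "\<phi> y = 1"
    using p \<open>\<phi> x0 = 1\<close> by (simp add: y_def diff C_def)
  have y_orth: "inner y k = 0" if "k \<in> C" for k
  proof -
    have "p + k \<in> C" "p - k \<in> C"
      using p that by (simp_all add: C_def add diff)
    from this[THEN closest_point_inner_le[OF \<open>convex C\<close> p _ p_min]] show ?thesis
      by (simp add: y_def)
  qed
  have "inner y y > 0"
    using \<phi>y zero by (metis inner_gt_zero_iff zero_neq_one)
  show ?thesis
  proof (intro exI allI)
    fix z
    have "z - \<phi> z *\<^sub>R y \<in> C"
      using \<phi>y by (simp add: C_def diff scale)
    then have "inner y (z - \<phi> z *\<^sub>R y) = 0"
      by (rule y_orth)
    then have "inner y z = \<phi> z * inner y y"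
      by (simp add: inner_diff_right)
    then show "inner ((1 / inner y y) *\<^sub>R y) z = \<phi> z"
      using \<open>inner y y > 0\<close> by simp
  qed
qed

section \<open>Bounded operators into \<open>c\<^sub>0\<close>\<close>

lemma bdd_above_abs_if_c0:
  assumes "x \<in> c0"
  shows "bdd_above (range (\<lambda>i. \<bar>x i\<bar>))"
proof -
  have "Bseq x"
    using assms unfolding c0_def by (blast intro: convergent_imp_Bseq convergentI)
  then obtain K where "\<And>i. norm (x i) \<le> K"
    using BseqE by metis
  then show ?thesis
    by (intro bdd_aboveI[of _ K]) auto
qed

lemma abs_le_supnorm: "bdd_above (range (\<lambda>i. \<bar>x i\<bar>)) \<Longrightarrow> \<bar>x i\<bar> \<le> supnorm x"
  unfolding supnorm_def by (rule cSUP_upper) auto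

lemma supnorm_le: "(\<And>i. \<bar>x i\<bar> \<le> M) \<Longrightarrow> supnorm x \<le> M"
  unfolding supnorm_def by (rule cSUP_least) auto

locale c0_operator =
  fixes A :: "'h::real_inner \<Rightarrow> nat \<Rightarrow> real"
  assumes bounded_linear_c0: "bounded_linear_c0 A"
begin

lemma A_add: "A (x + y) = (\<lambda>i. A x i + A y i)"
  using bounded_linear_c0 unfolding bounded_linear_c0_def by auto

lemma A_scaleR: "A (c *\<^sub>R x) = (\<lambda>i. c * A x i)"
  using bounded_linear_c0 unfolding bounded_linear_c0_def by auto

lemma A_zero: "A 0 = (\<lambda>_. 0)"
  using A_scaleR[of 0 0] by simp

lemma A_diff: "A (x - y) = (\<lambda>i. A x i - A y i)"
  using A_add[of x "-y"] A_scaleR[of "-1" y] by simp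

lemma A_sum: "A (\<Sum>j\<in>J. x j) = (\<lambda>i. \<Sum>j\<in>J. A (x j) i)"
  by (induction J rule: infinite_finite_induct) (simp_all add: A_zero A_add)

lemma A_tendsto_0: "A z \<longlonglongrightarrow> 0"
  using bounded_linear_c0 unfolding bounded_linear_c0_def c0_def by auto

lemma abs_A_le_supnorm: "\<bar>A z i\<bar> \<le> supnorm (A z)"
  using bounded_linear_c0 unfolding bounded_linear_c0_def
  by (intro abs_le_supnorm bdd_above_abs_if_c0) simp

lemma supnorm_A_nonneg: "0 \<le> supnorm (A z)"
  using abs_A_le_supnorm[of z 0] by linarith

lemma supnorm_A_eq_0_iff: "supnorm (A z) = 0 \<longleftrightarrow> A z = (\<lambda>_. 0)"
proof
  assume "supnorm (A z) = 0"
  then show "A z = (\<lambda>_. 0)"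
    using abs_A_le_supnorm[of z] by (auto simp: fun_eq_iff)
qed (simp add: supnorm_def)

lemma supnorm_A_le_add_diff: "supnorm (A x) \<le> supnorm (A z) + supnorm (A (z - x))"
proof (rule supnorm_le)
  fix i
  have "A x i = A z i - A (z - x) i"
    by (simp add: A_diff)
  then show "\<bar>A x i\<bar> \<le> supnorm (A z) + supnorm (A (z - x))"
    using abs_A_le_supnorm[of z i] abs_A_le_supnorm[of "z - x" i] by linarith
qed

lemma supnorm_A_le_bound: "\<exists>C\<ge>0. \<forall>z. supnorm (A z) \<le> C * norm z"
proof -
  obtain C where C: "\<And>z. supnorm (A z) \<le> C * norm z"
    using bounded_linear_c0 unfolding bounded_linear_c0_def by blast
  have "supnorm (A z) \<le> max C 0 * norm z" for z
    using C[of z] mult_right_mono[of C "max C 0" "norm z"] by simp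
  then show ?thesis
    by (intro exI[of _ "max C 0"]) auto
qed

lemma bounded_linear_A_coordinate: "bounded_linear (\<lambda>z. A z i)"
proof -
  obtain C where C: "\<And>z. supnorm (A z) \<le> C * norm z"
    using supnorm_A_le_bound by blast
  have "\<bar>A z i\<bar> \<le> norm z * C" for z
    using abs_A_le_supnorm[of z i] C[of z] by (simp add: mult.commute)
  then show ?thesis
    by (intro bounded_linear_intro[of _ C]) (simp_all add: A_add A_scaleR)
qed

end

section \<open>Sequences in \<open>\<ell>\<^sup>1\<close>\<close>

lemma l1norm_nonneg: "u \<in> ell1 \<Longrightarrow> 0 \<le> l1norm u"
  unfolding l1norm_def ell1_def by (intro suminf_nonneg) auto

lemma ell1_if_abs_le:
  "(\<And>i. \<bar>u i\<bar> \<le> \<bar>v i\<bar> + \<bar>w i\<bar>) \<Longrightarrow> v \<in> ell1 \<Longrightarrow> w \<in> ell1 \<Longrightarrow> u \<in> ell1"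
  unfolding ell1_def
  by (auto intro: summable_comparison_test[of "\<lambda>i. \<bar>u i\<bar>" "\<lambda>i. \<bar>v i\<bar> + \<bar>w i\<bar>"] summable_add)

lemma ell1_add: "v \<in> ell1 \<Longrightarrow> w \<in> ell1 \<Longrightarrow> (\<lambda>i. v i + w i) \<in> ell1"
  by (rule ell1_if_abs_le[of _ v w]) auto

lemma ell1_diff: "v \<in> ell1 \<Longrightarrow> w \<in> ell1 \<Longrightarrow> (\<lambda>i. v i - w i) \<in> ell1"
  by (rule ell1_if_abs_le[of _ v w]) auto

lemma l1norm_le_if_abs_le:
  assumes "v \<in> ell1" "w \<in> ell1" "\<And>i. \<bar>u i\<bar> \<le> \<bar>v i\<bar> + \<bar>w i\<bar>"
  shows "l1norm u \<le> l1norm v + l1norm w"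
proof -
  have su: "summable (\<lambda>i. \<bar>u i\<bar>)" and sv: "summable (\<lambda>i. \<bar>v i\<bar>)" and sw: "summable (\<lambda>i. \<bar>w i\<bar>)"
    using assms ell1_if_abs_le[OF assms(3)] unfolding ell1_def by auto
  have "l1norm u \<le> (\<Sum>i. \<bar>v i\<bar> + \<bar>w i\<bar>)"
    unfolding l1norm_def by (rule suminf_le[OF assms(3) su summable_add[OF sv sw]])
  also have "\<dots> = l1norm v + l1norm w"
    unfolding l1norm_def by (rule suminf_add[OF sv sw, symmetric])
  finally show ?thesis .
qed

lemma sum_abs_le_l1norm: "u \<in> ell1 \<Longrightarrow> (\<Sum>i<N. \<bar>u i\<bar>) \<le> l1norm u"
  unfolding l1norm_def ell1_def by (intro sum_le_suminf) auto

lemma abs_le_l1norm: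
  assumes "u \<in> ell1"
  shows "\<bar>u i\<bar> \<le> l1norm u"
proof -
  have "(\<Sum>j<Suc i. \<bar>u j\<bar>) = (\<Sum>j<i. \<bar>u j\<bar>) + \<bar>u i\<bar>" "0 \<le> (\<Sum>j<i. \<bar>u j\<bar>)"
    by (simp_all add: sum_nonneg)
  then show ?thesis
    using sum_abs_le_l1norm[OF assms, of "Suc i"] by linarith
qed

lemma ell1_pairing:
  assumes "u \<in> ell1" and "\<And>i. \<bar>x i\<bar> \<le> K"
  shows "summable (\<lambda>i. u i * x i)" and "\<bar>\<Sum>i. u i * x i\<bar> \<le> l1norm u * K"
proof -
  have s: "summable (\<lambda>i. \<bar>u i\<bar>)"
    using assms(1) unfolding ell1_def by auto
  have le: "\<bar>u i * x i\<bar> \<le> \<bar>u i\<bar> * K" for i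
    unfolding abs_mult by (rule mult_left_mono[OF assms(2)]) simp
  have sK: "summable (\<lambda>i. \<bar>u i\<bar> * K)"
    using s by (rule summable_mult2)
  have sabs: "summable (\<lambda>i. \<bar>u i * x i\<bar>)"
    by (rule summable_comparison_test[OF _ sK]) (use le in auto)
  then show "summable (\<lambda>i. u i * x i)"
    by (rule summable_rabs_cancel)
  have "\<bar>\<Sum>i. u i * x i\<bar> \<le> (\<Sum>i. \<bar>u i * x i\<bar>)"
    by (rule summable_rabs[OF sabs])
  also have "\<dots> \<le> (\<Sum>i. \<bar>u i\<bar> * K)"
    by (rule suminf_le[OF le sabs sK])
  also have "\<dots> = l1norm u * K"
    unfolding l1norm_def using suminf_mult2[OF s] by simp
  finally show "\<bar>\<Sum>i. u i * x i\<bar> \<le> l1norm u * K" .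
qed

lemma finitely_supported_ell1:
  assumes "\<And>j. j \<ge> N \<Longrightarrow> w j = 0"
  shows "w \<in> ell1" "l1norm w = (\<Sum>j<N. \<bar>w j\<bar>)" "(\<Sum>j. w j * x j) = (\<Sum>j<N. w j * x j)"
proof -
  have "summable (\<lambda>j. \<bar>w j\<bar>)"
    by (rule summable_finite[of "{..<N}"]) (use assms not_le in auto)
  then show "w \<in> ell1"
    unfolding ell1_def by simp
  show "l1norm w = (\<Sum>j<N. \<bar>w j\<bar>)" "(\<Sum>j. w j * x j) = (\<Sum>j<N. w j * x j)"
    unfolding l1norm_def by (rule suminf_finite; auto simp: assms)+
qed

lemma ell1_pointwise_limit:
  assumes lim: "\<And>i. (\<lambda>k. u k i) \<longlonglongrightarrow> v i"
    and bounded: "\<And>k. u k \<in> ell1" "\<And>k. l1norm (u k) \<le> L"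
  shows "v \<in> ell1" "l1norm v \<le> L"
proof -
  have partial: "(\<Sum>i<N. \<bar>v i\<bar>) \<le> L" for N
  proof (rule LIMSEQ_le_const2)
    show "(\<lambda>k. \<Sum>i<N. \<bar>u k i\<bar>) \<longlonglongrightarrow> (\<Sum>i<N. \<bar>v i\<bar>)"
      by (intro tendsto_intros lim)
    show "\<exists>K. \<forall>k\<ge>K. (\<Sum>i<N. \<bar>u k i\<bar>) \<le> L"
      using sum_abs_le_l1norm[OF bounded(1)] bounded(2) order_trans by blast
  qed
  have s: "summable (\<lambda>i. \<bar>v i\<bar>)"
    by (rule bounded_imp_summable[of _ L]) (use partial[of "Suc _"] in \<open>auto simp: lessThan_Suc_atMost\<close>)
  then show "v \<in> ell1"
    unfolding ell1_def by simp
  show "l1norm v \<le> L"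
    unfolding l1norm_def by (rule suminf_le_const[OF s partial])
qed

lemma suminf_mult_split:
  fixes w x :: "nat \<Rightarrow> real"
  assumes "summable (\<lambda>i. w i * (if i < N then 0 else x i))"
  shows "(\<Sum>i. w i * x i) = (\<Sum>i<N. w i * x i) + (\<Sum>i. w i * (if i < N then 0 else x i))"
proof -
  have head: "summable (\<lambda>i. w i * (if i < N then x i else 0))"
    by (rule summable_finite[of "{..<N}"]) auto
  have "(\<Sum>i. w i * x i) = (\<Sum>i. w i * (if i < N then x i else 0) + w i * (if i < N then 0 else x i))"
    by (intro suminf_cong) auto
  also have "\<dots> = (\<Sum>i. w i * (if i < N then x i else 0)) + (\<Sum>i. w i * (if i < N then 0 else x i))"
    by (rule suminf_add[OF head assms, symmetric])
  also have "(\<Sum>i. w i * (if i < N then x i else 0)) = (\<Sum>i<N. w i * x i)"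
    by (subst suminf_finite[of "{..<N}"]) auto
  finally show ?thesis .
qed

lemma ell1_pairing_tendsto_0:
  assumes lim: "\<And>i. (\<lambda>k. d k i) \<longlonglongrightarrow> 0"
    and bounded: "\<And>k. d k \<in> ell1" "\<And>k. l1norm (d k) \<le> B"
    and x: "x \<longlonglongrightarrow> 0"
  shows "(\<lambda>k. \<Sum>i. d k i * x i) \<longlonglongrightarrow> 0"
proof (rule LIMSEQ_I)
  fix \<epsilon> :: real
  assume "\<epsilon> > 0"
  define \<eta> where "\<eta> = \<epsilon> / (2 * (\<bar>B\<bar> + 1))"
  have "\<eta> > 0"
    using \<open>\<epsilon> > 0\<close> by (simp add: \<eta>_def)
  obtain N where N: "\<And>i. i \<ge> N \<Longrightarrow> \<bar>x i\<bar> < \<eta>"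
    using LIMSEQ_D[OF x \<open>\<eta> > 0\<close>] by auto
  define x' where "x' i = (if i < N then 0 else x i)" for i
  have x': "\<bar>x' i\<bar> \<le> \<eta>" for i
    using N[of i] \<open>\<eta> > 0\<close> by (auto simp: x'_def)
  have "(\<lambda>k. \<Sum>i<N. d k i * x i) \<longlonglongrightarrow> 0"
    using tendsto_sum[of "{..<N}" "\<lambda>i k. d k i * x i" "\<lambda>_. 0"] lim by (simp add: tendsto_mult_left_zero)
  then obtain K where K: "\<And>k. k \<ge> K \<Longrightarrow> \<bar>\<Sum>i<N. d k i * x i\<bar> < \<epsilon> / 2"
    using LIMSEQ_D[of _ 0 "\<epsilon> / 2"] \<open>\<epsilon> > 0\<close> by fastforce
  show "\<exists>K. \<forall>k\<ge>K. norm ((\<Sum>i. d k i * x i) - 0) < \<epsilon>"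
  proof (intro exI allI impI)
    fix k
    assume "k \<ge> K"
    have "(\<Sum>i. d k i * x i) = (\<Sum>i<N. d k i * x i) + (\<Sum>i. d k i * x' i)"
      unfolding x'_def by (rule suminf_mult_split) (use ell1_pairing(1)[OF bounded(1) x'] x'_def in simp)
    moreover have "\<bar>\<Sum>i. d k i * x' i\<bar> \<le> l1norm (d k) * \<eta>"
      by (rule ell1_pairing(2)[OF bounded(1) x'])
    moreover have "l1norm (d k) * \<eta> < \<epsilon> / 2"
    proof -
      have "l1norm (d k) * \<eta> \<le> \<bar>B\<bar> * \<eta>"
        using bounded(2)[of k] \<open>\<eta> > 0\<close> by (intro mult_right_mono) auto
      also have "\<dots> < \<epsilon> / 2"
        using \<open>\<epsilon> > 0\<close> by (simp add: \<eta>_def field_simps)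
      finally show ?thesis .
    qed
    ultimately show "norm ((\<Sum>i. d k i * x i) - 0) < \<epsilon>"
      using K[OF \<open>k \<ge> K\<close>] by simp
  qed
qed

lemma ell1_pairing_tendsto:
  assumes lim: "\<And>i. (\<lambda>k. u k i) \<longlonglongrightarrow> v i"
    and bounded: "\<And>k. u k \<in> ell1" "\<And>k. l1norm (u k) \<le> M"
    and v: "v \<in> ell1" and x: "x \<longlonglongrightarrow> 0"
  shows "(\<lambda>k. \<Sum>i. u k i * x i) \<longlonglongrightarrow> (\<Sum>i. v i * x i)"
proof -
  obtain K where K: "\<And>i. \<bar>x i\<bar> \<le> K"
    using convergent_imp_Bseq[OF convergentI[OF x]] BseqE by (metis real_norm_def)
  have "(\<lambda>k. \<Sum>i. (u k i - v i) * x i) \<longlonglongrightarrow> 0"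
  proof (rule ell1_pairing_tendsto_0[OF _ ell1_diff[OF bounded(1) v] _ x])
    show "(\<lambda>k. u k i - v i) \<longlonglongrightarrow> 0" for i
      using tendsto_diff[OF lim tendsto_const, of i "v i"] by simp
    show "l1norm (\<lambda>i. u k i - v i) \<le> M + l1norm v" for k
      using l1norm_le_if_abs_le[OF bounded(1)[of k] v, of "\<lambda>i. u k i - v i"] bounded(2)[of k] by force
  qed
  moreover have "(\<Sum>i. (u k i - v i) * x i) = (\<Sum>i. u k i * x i) - (\<Sum>i. v i * x i)" for k
    unfolding left_diff_distrib
    by (rule suminf_diff[OF ell1_pairing(1)[OF bounded(1) K] ell1_pairing(1)[OF v K], symmetric])
  ultimately show ?thesis
    using Lim_transform2 tendsto_add_const_iff by (simp add: LIM_zero_iff)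
qed

text \<open>Scheffe's argument: the defect \<open>|u\<^sub>k - v| - |u\<^sub>k| + |v|\<close> tends to \<open>0\<close> coordinatewise and is
  dominated by \<open>2|v|\<close>, so it has vanishing sum; the rest is \<open>\<parallel>u\<^sub>k\<parallel> - \<parallel>v\<parallel>\<close>.\<close>

lemma l1norm_diff_tendsto_0:
  assumes lim: "\<And>i. (\<lambda>k. u k i) \<longlonglongrightarrow> v i"
    and u: "\<And>k. u k \<in> ell1" and v: "v \<in> ell1"
    and limsup: "\<And>\<epsilon>. \<epsilon> > 0 \<Longrightarrow> \<exists>K. \<forall>k\<ge>K. l1norm (u k) \<le> l1norm v + \<epsilon>"
  shows "(\<lambda>k. l1norm (\<lambda>i. u k i - v i)) \<longlonglongrightarrow> 0"
proof -
  define g where "g i k = \<bar>u k i - v i\<bar> - \<bar>u k i\<bar> + \<bar>v i\<bar>" for i k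
  have sv: "summable (\<lambda>i. \<bar>v i\<bar>)" and su: "summable (\<lambda>i. \<bar>u k i\<bar>)"
    and sd: "summable (\<lambda>i. \<bar>u k i - v i\<bar>)" for k
    using u v ell1_diff[OF u v] unfolding ell1_def by auto
  have "(\<lambda>k. \<Sum>i. g i k) \<longlonglongrightarrow> (\<Sum>i. 0)"
  proof (rule tannerys_theorem[THEN conjunct2, THEN conjunct2])
    show "(\<lambda>k. g i k) \<longlonglongrightarrow> 0" for i
      unfolding g_def using tendsto_add[OF tendsto_diff[OF tendsto_rabs[OF tendsto_diff[OF lim[of i] tendsto_const]]
          tendsto_rabs[OF lim[of i]]] tendsto_const, of "v i" "\<bar>v i\<bar>"] by simp
    have "norm (g i k) \<le> 2 * \<bar>v i\<bar>" for i k
      using abs_triangle_ineq3[of "u k i - v i" "u k i"] unfolding g_def by (simp add: abs_le_iff)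
    then show "eventually (\<lambda>(i, k). norm (g i k) \<le> 2 * \<bar>v i\<bar>) (at_top \<times>\<^sub>F sequentially)"
      by (simp add: always_eventually)
    show "summable (\<lambda>i. 2 * \<bar>v i\<bar>)"
      using sv by (rule summable_mult)
  qed (rule sequentially_bot)
  then have defect: "(\<lambda>k. \<Sum>i. g i k) \<longlonglongrightarrow> 0"
    by simp
  have split: "l1norm (\<lambda>i. u k i - v i) = (\<Sum>i. g i k) + (l1norm (u k) - l1norm v)" for k
  proof -
    have "(\<Sum>i. g i k) = l1norm (\<lambda>i. u k i - v i) - l1norm (u k) + l1norm v"
      unfolding g_def l1norm_def
      by (simp only: suminf_diff[OF sd su] suminf_add[OF summable_diff[OF sd su] sv])
    then show ?thesis
      by simp
  qed
  show ?thesis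
  proof (rule LIMSEQ_I)
    fix \<epsilon> :: real
    assume "\<epsilon> > 0"
    obtain K1 where K1: "\<And>k. k \<ge> K1 \<Longrightarrow> \<bar>\<Sum>i. g i k\<bar> < \<epsilon> / 2"
      using LIMSEQ_D[OF defect, of "\<epsilon> / 2"] \<open>\<epsilon> > 0\<close> by auto
    obtain K2 where K2: "\<And>k. k \<ge> K2 \<Longrightarrow> l1norm (u k) \<le> l1norm v + \<epsilon> / 2"
      using limsup[of "\<epsilon> / 2"] \<open>\<epsilon> > 0\<close> by auto
    have "\<bar>l1norm (\<lambda>i. u k i - v i)\<bar> < \<epsilon>" if "k \<ge> max K1 K2" for k
    proof -
      have "0 \<le> l1norm (\<lambda>i. u k i - v i)"
        by (rule l1norm_nonneg[OF ell1_diff[OF u v]])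
      moreover have "(\<Sum>i. g i k) < \<epsilon> / 2"
        using K1[of k] that by (simp add: abs_less_iff)
      ultimately show ?thesis
        using split[of k] K2[of k] that by simp
    qed
    then show "\<exists>K. \<forall>k\<ge>K. norm (l1norm (\<lambda>i. u k i - v i) - 0) < \<epsilon>"
      by (intro exI[of _ "max K1 K2"]) simp
  qed
qed

lemma bounded_convergent_subseq:
  fixes s :: "nat \<Rightarrow> real"
  assumes "\<And>k. \<bar>s k\<bar> \<le> K"
  shows "\<exists>r. strict_mono r \<and> convergent (\<lambda>k. s (r k))"
proof -
  obtain r where r: "strict_mono r" "monoseq (\<lambda>k. s (r k))"
    using seq_monosub by blast
  have "Bseq (\<lambda>k. s (r k))"
    by (rule BseqI'[of _ K]) (use assms in auto)
  then show ?thesis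
    using r Bseq_monoseq_convergent by blast
qed

lemma coordinatewise_convergent_subseq:
  fixes x :: "nat \<Rightarrow> nat \<Rightarrow> real"
  assumes bounded: "\<And>i. \<exists>K. \<forall>k. \<bar>x k i\<bar> \<le> K"
  shows "\<exists>r l. strict_mono r \<and> (\<forall>i. (\<lambda>k. x (r k) i) \<longlonglongrightarrow> l i)"
proof -
  interpret subseqs "\<lambda>i s. convergent (\<lambda>k. x (s k) i)"
  proof
    fix i and s :: "nat \<Rightarrow> nat"
    obtain K where "\<forall>k. \<bar>x k i\<bar> \<le> K"
      using bounded by blast
    then obtain r where "strict_mono r" "convergent (\<lambda>k. x (s (r k)) i)"
      using bounded_convergent_subseq[of "\<lambda>k. x (s k) i" K] by blast
    then show "\<exists>r'. strict_mono r' \<and> convergent (\<lambda>k. x ((s \<circ> r') k) i)"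
      by auto
  qed
  have "convergent (\<lambda>k. x ((diagseq \<circ> (+) (Suc i)) k) i)" for i
  proof (rule diagseq_holds)
    fix r s n
    assume "strict_mono (r :: nat \<Rightarrow> nat)" "convergent (\<lambda>k. x (s k) n)"
    then show "convergent (\<lambda>k. x ((s \<circ> r) k) n)"
      unfolding convergent_def o_def using LIMSEQ_subseq_LIMSEQ[of "\<lambda>k. x (s k) n" _ r]
      by (auto simp: o_def)
  qed
  have "convergent (\<lambda>k. x (diagseq k) i)" for i
  proof -
    obtain L where "(\<lambda>k. x (diagseq (Suc i + k)) i) \<longlonglongrightarrow> L"
      using \<open>\<And>i. convergent (\<lambda>k. x ((diagseq \<circ> (+) (Suc i)) k) i)\<close>[of i]
      unfolding convergent_def o_def by blast
    then have "(\<lambda>k. x (diagseq (k + Suc i)) i) \<longlonglongrightarrow> L"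
      by (simp add: add.commute)
    then have "(\<lambda>k. x (diagseq k) i) \<longlonglongrightarrow> L"
      by (rule LIMSEQ_offset)
    then show ?thesis
      unfolding convergent_def by blast
  qed
  then have "\<forall>i. (\<lambda>k. x (diagseq k) i) \<longlonglongrightarrow> lim (\<lambda>k. x (diagseq k) i)"
    by (simp add: convergent_LIMSEQ_iff)
  then show ?thesis
    using subseq_diagseq by (intro exI[of _ diagseq] exI[of _ "\<lambda>i. lim (\<lambda>k. x (diagseq k) i)"]) simp
qed

section \<open>The adjoint and limits of approximate solutions\<close>

lemma (in c0_operator) adj_eqI:
  assumes "\<And>z. inner w z = (\<Sum>i. u i * A z i)"
  shows "adj A u = w"
  unfolding adj_def
proof (rule the_equality)
  show "\<forall>z. inner w z = (\<Sum>i. u i * A z i)"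
    using assms by blast
  fix w'
  assume "\<forall>z. inner w' z = (\<Sum>i. u i * A z i)"
  then have "inner (w' - w) (w' - w) = 0"
    using assms by (simp add: inner_diff_left)
  then show "w' = w"
    by simp
qed

locale hilbert_c0_operator = c0_operator A for A :: "'h::{real_inner,complete_space} \<Rightarrow> nat \<Rightarrow> real"

lemma (in hilbert_c0_operator) inner_adj:
  assumes u: "u \<in> ell1"
  shows "inner (adj A u) z = (\<Sum>i. u i * A z i)"
proof -
  obtain C where C: "\<And>z. supnorm (A z) \<le> C * norm z"
    using supnorm_A_le_bound by blast
  define \<phi> where "\<phi> z = (\<Sum>i. u i * A z i)" for z
  have summable: "summable (\<lambda>i. u i * A z i)" for z
    by (rule ell1_pairing(1)[OF u abs_A_le_supnorm])
  have "bounded_linear \<phi>"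
  proof (rule bounded_linear_intro[of _ "l1norm u * C"])
    show "\<phi> (x + y) = \<phi> x + \<phi> y" for x y
      unfolding \<phi>_def A_add by (simp add: distrib_left suminf_add[OF summable summable])
    show "\<phi> (r *\<^sub>R x) = r *\<^sub>R \<phi> x" for r x
      unfolding \<phi>_def A_scaleR using suminf_mult[OF summable, of r] by (simp add: algebra_simps)
    show "norm (\<phi> x) \<le> norm x * (l1norm u * C)" for x
    proof -
      have "\<bar>\<phi> x\<bar> \<le> l1norm u * supnorm (A x)"
        unfolding \<phi>_def by (rule ell1_pairing(2)[OF u abs_A_le_supnorm])
      also have "\<dots> \<le> l1norm u * (C * norm x)"
        by (rule mult_left_mono[OF C l1norm_nonneg[OF u]])
      finally show ?thesis
        by (simp add: algebra_simps)
    qed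
  qed
  then obtain w where w: "\<And>z. inner w z = \<phi> z"
    using riesz_representation by blast
  then have "adj A u = w"
    by (intro adj_eqI) (simp add: \<phi>_def)
  then show ?thesis
    using w by (simp add: \<phi>_def)
qed

lemma exists_near_minimizers:
  fixes g :: "nat \<Rightarrow> 'a \<Rightarrow> real"
  assumes ne: "\<And>n. S n \<noteq> {}" and nonneg: "\<And>n x. x \<in> S n \<Longrightarrow> 0 \<le> g n x"
    and lim: "(\<lambda>n. INF x\<in>S n. g n x) \<longlonglongrightarrow> 0"
  shows "\<exists>Z. (\<forall>n. Z n \<in> S n) \<and> (\<lambda>n. g n (Z n)) \<longlonglongrightarrow> 0"
proof -
  have "\<exists>x\<in>S n. g n x < (INF x\<in>S n. g n x) + 1 / Suc n" for n
    using cInf_lessD[of "g n ` S n" "(INF x\<in>S n. g n x) + 1 / Suc n"] ne[of n] by simp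
  then obtain Z where Z: "\<And>n. Z n \<in> S n" "\<And>n. g n (Z n) < (INF x\<in>S n. g n x) + 1 / Suc n"
    by metis
  have upper: "(\<lambda>n. (INF x\<in>S n. g n x) + 1 / Suc n) \<longlonglongrightarrow> 0"
    using tendsto_add[OF lim LIMSEQ_Suc[OF lim_1_over_n]] by simp
  have "(\<lambda>n. g n (Z n)) \<longlonglongrightarrow> 0"
  proof (rule tendsto_sandwich[OF _ _ tendsto_const upper])
    show "\<forall>\<^sub>F n in sequentially. 0 \<le> g n (Z n)"
      by (intro always_eventually allI nonneg Z(1))
    show "\<forall>\<^sub>F n in sequentially. g n (Z n) \<le> (INF x\<in>S n. g n x) + 1 / Suc n"
      by (intro always_eventually allI less_imp_le Z(2))
  qed
  then show ?thesis
    using Z(1) by blast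
qed

context hilbert_c0_operator
begin

lemma pairing_tendsto_if_consistent:
  assumes U: "\<And>n. U n \<in> ell1" "\<And>n. l1norm (U n) \<le> M"
    and u0: "u0 \<in> ell1" "adj A u0 = f"
    and ne: "\<And>n. S n \<noteq> {}" and approx: "(\<lambda>n. INF x\<in>S n. supnorm (A (z - x))) \<longlonglongrightarrow> 0"
    and err: "\<And>n. 0 \<le> \<epsilon> n" "\<epsilon> \<longlonglongrightarrow> 0"
    and consistent: "\<And>n x. x \<in> S n \<Longrightarrow> \<bar>(\<Sum>i. U n i * A x i) - inner x f\<bar> \<le> \<epsilon> n * supnorm (A x)"
  shows "(\<lambda>n. \<Sum>i. U n i * A z i) \<longlonglongrightarrow> inner z f"
proof -
  obtain Z where Z: "\<And>n. Z n \<in> S n" and a: "(\<lambda>n. supnorm (A (z - Z n))) \<longlonglongrightarrow> 0"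
    using exists_near_minimizers[of S "\<lambda>_ x. supnorm (A (z - x))"] ne supnorm_A_nonneg approx by blast
  define a where "a n = supnorm (A (z - Z n))" for n
  have pairing: "\<bar>\<Sum>i. u i * A x i\<bar> \<le> l1norm u * supnorm (A x)" if "u \<in> ell1" for u x
    by (rule ell1_pairing(2)[OF that abs_A_le_supnorm])
  have bound: "\<bar>(\<Sum>i. U n i * A z i) - inner z f\<bar>
      \<le> M * a n + \<epsilon> n * (supnorm (A z) + a n) + l1norm u0 * a n" for n
  proof -
    have "(\<lambda>i. U n i * A z i) = (\<lambda>i. U n i * A (z - Z n) i + U n i * A (Z n) i)"
      by (simp add: A_diff algebra_simps)
    then have split: "(\<Sum>i. U n i * A z i) = (\<Sum>i. U n i * A (z - Z n) i) + (\<Sum>i. U n i * A (Z n) i)"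
      using suminf_add[OF ell1_pairing(1)[OF U(1) abs_A_le_supnorm] ell1_pairing(1)[OF U(1) abs_A_le_supnorm]]
      by simp
    have "inner (z - Z n) f = (\<Sum>i. u0 i * A (z - Z n) i)"
      using inner_adj[OF u0(1), of "z - Z n"] u0(2) by (simp add: inner_commute)
    then have "inner z f = (\<Sum>i. u0 i * A (z - Z n) i) + inner (Z n) f"
      by (simp add: inner_diff_left)
    moreover have "\<bar>\<Sum>i. U n i * A (z - Z n) i\<bar> \<le> M * a n"
    proof -
      have "\<bar>\<Sum>i. U n i * A (z - Z n) i\<bar> \<le> l1norm (U n) * a n"
        unfolding a_def by (rule pairing[OF U(1)])
      also have "\<dots> \<le> M * a n"
        unfolding a_def by (rule mult_right_mono[OF U(2) supnorm_A_nonneg])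
      finally show ?thesis .
    qed
    moreover have "\<bar>(\<Sum>i. U n i * A (Z n) i) - inner (Z n) f\<bar> \<le> \<epsilon> n * (supnorm (A z) + a n)"
    proof -
      have "\<bar>(\<Sum>i. U n i * A (Z n) i) - inner (Z n) f\<bar> \<le> \<epsilon> n * supnorm (A (Z n))"
        by (rule consistent[OF Z])
      also have "\<dots> \<le> \<epsilon> n * (supnorm (A z) + a n)"
        unfolding a_def by (rule mult_left_mono[OF supnorm_A_le_add_diff err(1)])
      finally show ?thesis .
    qed
    moreover have "\<bar>\<Sum>i. u0 i * A (z - Z n) i\<bar> \<le> l1norm u0 * a n"
      unfolding a_def by (rule pairing[OF u0(1)])
    ultimately show ?thesis
      using split by linarith
  qed
  have a0: "a \<longlonglongrightarrow> 0"
    unfolding a_def by (rule a)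
  have "(\<lambda>n. \<epsilon> n * (supnorm (A z) + a n)) \<longlonglongrightarrow> 0 * (supnorm (A z) + 0)"
    by (rule tendsto_mult[OF err(2) tendsto_add[OF tendsto_const a0]])
  then have "(\<lambda>n. M * a n + \<epsilon> n * (supnorm (A z) + a n) + l1norm u0 * a n) \<longlonglongrightarrow> 0"
    by (intro tendsto_add_zero tendsto_mult_right_zero[OF a0]) simp
  then have "(\<lambda>n. (\<Sum>i. U n i * A z i) - inner z f) \<longlonglongrightarrow> 0"
    by (rule Lim_null_comparison[OF always_eventually, rotated]) (use bound in simp)
  then show ?thesis
    by (simp add: LIM_zero_iff)
qed

text \<open>The limit of a coordinatewise convergent subsequence solves \<open>A\<^sup>*u = f\<close> by weak-* continuity
  of the pairing with \<open>c\<^sub>0\<close>, and the bound on the norms upgrades the convergence to the norm.\<close>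

lemma l1_convergent_subseq_to_solution:
  assumes U: "\<And>n. U n \<in> ell1" "\<And>n. l1norm (U n) \<le> M"
    and weak: "\<And>z. (\<lambda>n. \<Sum>i. U n i * A z i) \<longlonglongrightarrow> inner z f"
    and limsup: "\<And>v \<epsilon>. v \<in> ell1 \<Longrightarrow> adj A v = f \<Longrightarrow> \<epsilon> > 0 \<Longrightarrow> \<exists>K. \<forall>n\<ge>K. l1norm (U n) \<le> l1norm v + \<epsilon>"
  shows "\<exists>r u. strict_mono r \<and> u \<in> ell1 \<and> adj A u = f \<and> (\<lambda>k. l1norm (\<lambda>i. U (r k) i - u i)) \<longlonglongrightarrow> 0"
proof -
  have "\<bar>U k i\<bar> \<le> M" for k i
    using abs_le_l1norm[OF U(1), of k i] U(2)[of k] by linarith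
  then have "\<exists>K. \<forall>k. \<bar>U k i\<bar> \<le> K" for i
    by blast
  then obtain r v where r: "strict_mono r" and lim: "\<And>i. (\<lambda>k. U (r k) i) \<longlonglongrightarrow> v i"
    using coordinatewise_convergent_subseq[of U] by blast
  have v: "v \<in> ell1"
    by (rule ell1_pointwise_limit(1)[OF lim U])
  have "adj A v = f"
  proof (rule adj_eqI)
    fix z
    have "(\<lambda>k. \<Sum>i. U (r k) i * A z i) \<longlonglongrightarrow> (\<Sum>i. v i * A z i)"
      by (rule ell1_pairing_tendsto[OF lim U v A_tendsto_0])
    moreover have "(\<lambda>k. \<Sum>i. U (r k) i * A z i) \<longlonglongrightarrow> inner z f"
      using LIMSEQ_subseq_LIMSEQ[OF weak r] by (simp add: o_def)
    ultimately have "(\<Sum>i. v i * A z i) = inner z f"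
      by (rule LIMSEQ_unique)
    then show "inner f z = (\<Sum>i. v i * A z i)"
      by (simp add: inner_commute)
  qed
  moreover have "(\<lambda>k. l1norm (\<lambda>i. U (r k) i - v i)) \<longlonglongrightarrow> 0"
  proof (rule l1norm_diff_tendsto_0[OF lim U(1) v])
    fix \<epsilon> :: real
    assume "\<epsilon> > 0"
    then obtain K where K: "\<And>n. n \<ge> K \<Longrightarrow> l1norm (U n) \<le> l1norm v + \<epsilon>"
      using limsup[OF v \<open>adj A v = f\<close>] by blast
    have "l1norm (U (r k)) \<le> l1norm v + \<epsilon>" if "k \<ge> K" for k
      using K seq_suble[OF r, of k] that by simp
    then show "\<exists>K. \<forall>k\<ge>K. l1norm (U (r k)) \<le> l1norm v + \<epsilon>"
      by blast
  qed
  ultimately show ?thesis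
    using r v by blast
qed

end

section \<open>Finite-dimensional trial spaces\<close>

definition orthonormal :: "'a::real_inner set \<Rightarrow> bool" where
  "orthonormal E \<longleftrightarrow> pairwise orthogonal E \<and> (\<forall>e\<in>E. norm e = 1)"

lemma orthonormal_basis_of_span:
  fixes B :: "'a::real_inner set"
  assumes "finite B"
  shows "\<exists>E. finite E \<and> orthonormal E \<and> span E = span B"
proof -
  obtain C where C: "finite C" "span C = span B" "pairwise orthogonal C"
    using basis_orthogonal[OF assms] by blast
  define E where "E = (\<lambda>c. (1 / norm c) *\<^sub>R c) ` (C - {0})"
  have "finite E"
    unfolding E_def using C(1) by simp
  moreover have "pairwise orthogonal E"
  proof (rule pairwiseI)
    fix x y
    assume "x \<in> E" "y \<in> E" "x \<noteq> y"
    then obtain c c' where "c \<in> C" "c' \<in> C" "c \<noteq> c'"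
      and "x = (1 / norm c) *\<^sub>R c" "y = (1 / norm c') *\<^sub>R c'"
      unfolding E_def by blast
    then show "orthogonal x y"
      using C(3) by (simp add: pairwise_def orthogonal_def)
  qed
  moreover have "\<forall>e\<in>E. norm e = 1"
    unfolding E_def by auto
  moreover have "span E = span C"
  proof -
    have "E \<subseteq> span C"
      unfolding E_def by (auto intro: span_scale span_base)
    moreover have "c \<in> span E" if "c \<in> C" for c
    proof (cases "c = 0")
      case False
      then have "(1 / norm c) *\<^sub>R c \<in> E" and "c = norm c *\<^sub>R ((1 / norm c) *\<^sub>R c)"
        using that by (auto simp: E_def)
      then show ?thesis
        by (metis span_base span_scale)
    qed (simp add: span_zero)
    ultimately show ?thesis
      by (simp add: span_eq subset_iff)
  qed
  ultimately show ?thesis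
    unfolding orthonormal_def using C(2) by metis
qed

lemma inner_orthonormal_sum:
  assumes "finite E" "orthonormal E" "e \<in> E"
  shows "inner e (\<Sum>e'\<in>E. c e' *\<^sub>R e') = c e"
proof -
  have "inner e (\<Sum>e'\<in>E. c e' *\<^sub>R e') = (\<Sum>e'\<in>E. c e' * inner e e')"
    by (simp add: inner_sum_right)
  also have "\<dots> = c e * inner e e + (\<Sum>e'\<in>E - {e}. c e' * inner e e')"
    by (rule sum.remove[OF assms(1,3)])
  also have "(\<Sum>e'\<in>E - {e}. c e' * inner e e') = 0"
    using assms(2,3) by (intro sum.neutral) (auto simp: orthonormal_def pairwise_def orthogonal_def)
  also have "inner e e = 1"
    using assms(2,3) by (simp add: orthonormal_def dot_square_norm)
  finally show ?thesis
    by simp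
qed

lemma orthonormal_expansion:
  assumes "finite E" "orthonormal E" "z \<in> span E"
  shows "z = (\<Sum>e\<in>E. inner e z *\<^sub>R e)"
proof -
  obtain c where z: "z = (\<Sum>e\<in>E. c e *\<^sub>R e)"
    using assms(3) span_finite[OF assms(1)] by auto
  have "inner e z = c e" if "e \<in> E" for e
    unfolding z by (rule inner_orthonormal_sum[OF assms(1,2) that])
  then have "(\<Sum>e\<in>E. inner e z *\<^sub>R e) = (\<Sum>e\<in>E. c e *\<^sub>R e)"
    by (intro sum.cong) simp_all
  then show ?thesis
    using z by simp
qed

lemma subspace_eq_span_orthonormal:
  fixes S :: "'a::real_inner set"
  assumes "subspace S" "dim S \<noteq> 0"
  shows "\<exists>E. finite E \<and> orthonormal E \<and> span E = S"
proof -
  obtain B where B: "B \<subseteq> S" "independent B" "S \<subseteq> span B" "card B = dim S"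
    using basis_exists by blast
  have "finite B"
  proof (rule ccontr)
    assume "infinite B"
    then show False
      using B(4) assms(2) by simp
  qed
  moreover have "span B = S"
    using B(1,3) span_minimal[OF B(1) assms(1)] by blast
  ultimately show ?thesis
    using orthonormal_basis_of_span by metis
qed

context c0_operator
begin

lemma A_orthonormal_expansion:
  assumes "finite E" "orthonormal E" "z \<in> span E"
  shows "A z i = (\<Sum>e\<in>E. inner e z * A e i)"
  by (subst orthonormal_expansion[OF assms]) (simp add: A_sum A_scaleR)

text \<open>On a finite-dimensional space on which \<open>A\<close> is injective, \<open>\<parallel>A\<cdot>\<parallel>\<^sub>\<infinity>\<close> is a norm, hence equivalent to
  \<open>\<parallel>\<cdot>\<parallel>\<close>; the proof is the usual compactness argument in orthonormal coordinates.\<close>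

lemma norm_le_supnorm_on_span:
  assumes E: "finite E" "orthonormal E"
    and inj: "\<And>z. z \<in> span E \<Longrightarrow> A z = (\<lambda>_. 0) \<Longrightarrow> z = 0"
  shows "\<exists>c\<ge>0. \<forall>z\<in>span E. norm z \<le> c * supnorm (A z)"
proof (rule ccontr)
  assume "\<not> (\<exists>c\<ge>0. \<forall>z\<in>span E. norm z \<le> c * supnorm (A z))"
  then have "\<forall>k::nat. \<exists>z\<in>span E. real (Suc k) * supnorm (A z) < norm z"
    by (metis not_le of_nat_0_le_iff)
  then obtain Z where Z: "\<And>k. Z k \<in> span E" "\<And>k. real (Suc k) * supnorm (A (Z k)) < norm (Z k)"
    by metis
  have "Z k \<noteq> 0" for k
    using Z(2)[of k] by (auto simp: A_zero supnorm_def)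
  define Y where "Y k = (1 / norm (Z k)) *\<^sub>R Z k" for k
  have Y_span: "Y k \<in> span E" and Y_norm: "norm (Y k) = 1" for k
    using Z(1) \<open>Z k \<noteq> 0\<close> by (simp_all add: Y_def span_scale)
  have Y_small: "\<bar>A (Y k) i\<bar> \<le> 1 / real (Suc k)" for k i
  proof -
    have "\<bar>A (Y k) i\<bar> = \<bar>A (Z k) i\<bar> / norm (Z k)"
      by (simp add: Y_def A_scaleR abs_mult)
    also have "\<dots> \<le> supnorm (A (Z k)) / norm (Z k)"
      by (rule divide_right_mono[OF abs_A_le_supnorm]) simp
    also have "\<dots> \<le> 1 / real (Suc k)"
      using Z(2)[of k] \<open>Z k \<noteq> 0\<close> by (simp add: divide_simps mult.commute)
    finally show ?thesis .
  qed
  have "\<bar>inner (from_nat_into E i) (Y k)\<bar> \<le> norm (from_nat_into E i)" for i k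
    using Cauchy_Schwarz_ineq2[of "from_nat_into E i" "Y k"] Y_norm[of k] by simp
  then have "\<exists>K. \<forall>k. \<bar>inner (from_nat_into E i) (Y k)\<bar> \<le> K" for i
    by blast
  then obtain r l where r: "strict_mono r"
    and lim: "\<And>i. (\<lambda>k. inner (from_nat_into E i) (Y (r k))) \<longlonglongrightarrow> l i"
    using coordinatewise_convergent_subseq[of "\<lambda>k i. inner (from_nat_into E i) (Y k)"] by blast
  define \<zeta> where "\<zeta> = (\<Sum>e\<in>E. l (to_nat_on E e) *\<^sub>R e)"
  have "(\<lambda>k. inner e (Y (r k))) \<longlonglongrightarrow> l (to_nat_on E e)" if "e \<in> E" for e
    using lim[of "to_nat_on E e"] that E(1) by (simp add: countable_finite)
  then have "(\<lambda>k. \<Sum>e\<in>E. inner e (Y (r k)) *\<^sub>R e) \<longlonglongrightarrow> \<zeta>"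
    unfolding \<zeta>_def by (intro tendsto_sum tendsto_scaleR tendsto_const)
  then have Y_lim: "(\<lambda>k. Y (r k)) \<longlonglongrightarrow> \<zeta>"
    by (simp add: orthonormal_expansion[OF E Y_span, symmetric])
  have "\<zeta> \<in> span E"
    unfolding \<zeta>_def by (intro span_sum span_scale span_base)
  moreover have "norm \<zeta> = 1"
    using tendsto_norm[OF Y_lim] Y_norm by (simp add: LIMSEQ_const_iff)
  moreover have "A \<zeta> = (\<lambda>_. 0)"
  proof
    fix i
    have "(\<lambda>k. A (Y (r k)) i) \<longlonglongrightarrow> A \<zeta> i"
      by (rule bounded_linear.tendsto[OF bounded_linear_A_coordinate Y_lim])
    moreover have "(\<lambda>k. A (Y (r k)) i) \<longlonglongrightarrow> 0"
    proof (rule Lim_null_comparison[OF always_eventually])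
      show "\<forall>k. norm (A (Y (r k)) i) \<le> 1 / real (Suc (r k))"
        using Y_small by simp
      show "(\<lambda>k. 1 / real (Suc (r k))) \<longlonglongrightarrow> 0"
        using LIMSEQ_subseq_LIMSEQ[OF LIMSEQ_Suc[OF lim_1_over_n] r] by (simp add: o_def)
    qed
    ultimately show "A \<zeta> i = 0"
      by (rule LIMSEQ_unique)
  qed
  ultimately show False
    using inj[of \<zeta>] by auto
qed

lemma norm_le_kappa_mult_supnorm:
  assumes c: "\<And>z. z \<in> S \<Longrightarrow> norm z \<le> c * supnorm (A z)"
    and inj: "\<And>z. z \<in> S \<Longrightarrow> A z = (\<lambda>_. 0) \<Longrightarrow> z = 0" and z: "z \<in> S"
  shows "norm z \<le> kappa A S * supnorm (A z)"
proof (cases "z = 0")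
  case True
  then show ?thesis
    by (simp add: A_zero supnorm_def)
next
  case False
  have pos: "0 < supnorm (A y)" if "y \<in> S" "y \<noteq> 0" for y
    using inj[OF that(1)] that(2) supnorm_A_eq_0_iff[of y] supnorm_A_nonneg[of y] by linarith
  have "bdd_above ((\<lambda>y. norm y / supnorm (A y)) ` (S - {0}))"
  proof (rule bdd_aboveI2)
    fix y
    assume "y \<in> S - {0}"
    then show "norm y / supnorm (A y) \<le> c"
      using c[of y] pos[of y] by (simp add: divide_le_eq)
  qed
  then have "norm z / supnorm (A z) \<le> kappa A S"
    unfolding kappa_def using z False by (intro cSUP_upper) auto
  then show ?thesis
    using pos[OF z False] by (simp add: divide_le_eq)
qed

lemma uniformly_small_tail_on_span:
  assumes E: "finite E" "orthonormal E"
    and c: "0 \<le> c" "\<And>z. z \<in> span E \<Longrightarrow> norm z \<le> c * supnorm (A z)"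
  shows "\<exists>N. \<forall>z\<in>span E. \<forall>i\<ge>N. \<bar>A z i\<bar> \<le> supnorm (A z) / 2"
proof -
  define \<epsilon> where "\<epsilon> i = (\<Sum>e\<in>E. \<bar>A e i\<bar>)" for i
  have "\<epsilon> \<longlonglongrightarrow> (\<Sum>e\<in>E. 0)"
    unfolding \<epsilon>_def by (intro tendsto_sum tendsto_rabs_zero A_tendsto_0)
  then obtain N where N: "\<And>i. i \<ge> N \<Longrightarrow> \<epsilon> i < 1 / (2 * (c + 1))"
    using LIMSEQ_D[of \<epsilon> 0 "1 / (2 * (c + 1))"] c(1) by (auto simp: abs_less_iff)
  have "\<bar>A z i\<bar> \<le> supnorm (A z) / 2" if "z \<in> span E" "i \<ge> N" for z i
  proof -
    have "\<bar>A z i\<bar> \<le> (\<Sum>e\<in>E. \<bar>inner e z * A e i\<bar>)"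
      unfolding A_orthonormal_expansion[OF E that(1)] by (rule sum_abs)
    also have "\<dots> \<le> (\<Sum>e\<in>E. norm z * \<bar>A e i\<bar>)"
    proof (rule sum_mono)
      fix e
      assume "e \<in> E"
      then have "\<bar>inner e z\<bar> \<le> norm z"
        using Cauchy_Schwarz_ineq2[of e z] E(2) by (simp add: orthonormal_def)
      then show "\<bar>inner e z * A e i\<bar> \<le> norm z * \<bar>A e i\<bar>"
        unfolding abs_mult by (rule mult_right_mono) simp
    qed
    also have "\<dots> = norm z * \<epsilon> i"
      by (simp add: \<epsilon>_def sum_distrib_left)
    also have "\<dots> \<le> (c * supnorm (A z)) * (1 / (2 * (c + 1)))"
      using c(2)[OF that(1)] N[OF that(2)] c(1) supnorm_A_nonneg[of z]
      by (intro mult_mono) (simp_all add: \<epsilon>_def sum_nonneg)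
    also have "\<dots> \<le> supnorm (A z) / 2"
      using c(1) supnorm_A_nonneg[of z] by (simp add: field_simps)
    finally show ?thesis .
  qed
  then show ?thesis
    by blast
qed

end

lemma separation_convex_hull_finite:
  fixes P :: "'a::real_inner set"
  assumes "finite P" "P \<noteq> {}" "t \<notin> convex hull P"
  shows "\<exists>c\<in>span (insert t P). c \<noteq> 0 \<and> (\<forall>x\<in>P. inner c x < inner c t)"
proof -
  define K where "K = convex hull P"
  have "compact K"
    unfolding K_def by (rule finite_imp_compact_convex_hull[OF assms(1)])
  moreover have "K \<noteq> {}"
    using assms(2) hull_subset[of P convex] by (auto simp: K_def)
  moreover have "continuous_on K (\<lambda>x. norm (t - x))"
    by (intro continuous_intros)
  ultimately have "\<exists>p\<in>K. \<forall>x\<in>K. norm (t - p) \<le> norm (t - x)"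
    by (rule continuous_attains_inf)
  then obtain p where p: "p \<in> K" and p_min: "\<And>x. x \<in> K \<Longrightarrow> norm (t - p) \<le> norm (t - x)"
    by blast
  define c where "c = t - p"
  have "c \<noteq> 0"
    using p assms(3) by (auto simp: c_def K_def)
  moreover have "c \<in> span (insert t P)"
  proof -
    have "p \<in> span P"
      using p convex_hull_subset_span by (auto simp: K_def)
    then show ?thesis
      unfolding c_def by (meson insertI1 span_base span_diff span_mono subset_insertI subsetD)
  qed
  moreover have "inner c x < inner c t" if "x \<in> P" for x
  proof -
    have "x \<in> K"
      using that hull_subset[of P convex] by (auto simp: K_def)
    then have "inner c (x - p) \<le> 0"
      unfolding c_def by (rule closest_point_inner_le[OF convex_convex_hull[of P, folded K_def] p _ p_min])
    then have "inner c x \<le> inner c p"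
      by (simp add: inner_diff_right)
    moreover have "inner c t = inner c p + inner c c"
      by (simp add: c_def inner_diff_right)
    moreover have "inner c c > 0"
      using \<open>c \<noteq> 0\<close> by simp
    ultimately show ?thesis
      by linarith
  qed
  ultimately show ?thesis
    by blast
qed

lemma convex_hull_signed_points:
  fixes v :: "nat \<Rightarrow> 'a::real_vector"
  assumes "x \<in> convex hull ((\<lambda>(s, j). (s * M) *\<^sub>R v j) ` ({-1, 1} \<times> {..<N}))" and "0 \<le> M"
  shows "\<exists>w. (\<forall>j\<ge>N. w j = 0) \<and> (\<Sum>j<N. \<bar>w j\<bar>) \<le> M \<and> x = (\<Sum>j<N. w j *\<^sub>R v j)"
proof -
  define W where "W = {w. (\<forall>j\<ge>N. w j = 0) \<and> (\<Sum>j<N. \<bar>w j\<bar>) \<le> M}"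
  define L where "L w = (\<Sum>j<N. w j *\<^sub>R v j)" for w
  have "convex hull ((\<lambda>(s, j). (s * M) *\<^sub>R v j) ` ({-1, 1} \<times> {..<N})) \<subseteq> L ` W"
  proof (rule hull_minimal)
    show "(\<lambda>(s, j). (s * M) *\<^sub>R v j) ` ({-1, 1} \<times> {..<N}) \<subseteq> L ` W"
    proof
      fix x
      assume "x \<in> (\<lambda>(s, j). (s * M) *\<^sub>R v j) ` ({-1, 1} \<times> {..<N})"
      then obtain s j where sj: "s \<in> {-1, 1}" "j < N" and x: "x = (s * M) *\<^sub>R v j"
        by auto
      define w where "w i = (if i = j then s * M else 0)" for i
      have "(\<Sum>i<N. \<bar>w i\<bar>) = (\<Sum>i<N. if i = j then \<bar>s * M\<bar> else 0)"
        by (rule sum.cong) (simp_all add: w_def)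
      then have "(\<Sum>i<N. \<bar>w i\<bar>) = M"
        using sj assms(2) by auto
      then have "w \<in> W"
        using sj by (simp add: W_def w_def)
      moreover have "L w = (\<Sum>i<N. if i = j then (s * M) *\<^sub>R v j else 0)"
        unfolding L_def by (rule sum.cong) (simp_all add: w_def)
      then have "L w = x"
        using sj x by simp
      ultimately show "x \<in> L ` W"
        by blast
    qed
    show "convex (L ` W)"
    proof (rule convexI)
      fix a b :: real and x y
      assume "x \<in> L ` W" "y \<in> L ` W" "0 \<le> a" "0 \<le> b" "a + b = 1"
      then obtain w w' where w: "w \<in> W" "x = L w" and w': "w' \<in> W" "y = L w'"
        by blast
      define w'' where "w'' j = a * w j + b * w' j" for j
      have "\<bar>w'' j\<bar> \<le> a * \<bar>w j\<bar> + b * \<bar>w' j\<bar>" for j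
        using abs_triangle_ineq[of "a * w j" "b * w' j"] \<open>0 \<le> a\<close> \<open>0 \<le> b\<close>
        by (simp add: w''_def abs_mult)
      then have "(\<Sum>j<N. \<bar>w'' j\<bar>) \<le> (\<Sum>j<N. a * \<bar>w j\<bar> + b * \<bar>w' j\<bar>)"
        by (rule sum_mono)
      also have "\<dots> = a * (\<Sum>j<N. \<bar>w j\<bar>) + b * (\<Sum>j<N. \<bar>w' j\<bar>)"
        by (simp add: sum.distrib sum_distrib_left)
      also have "\<dots> \<le> a * M + b * M"
        using w(1) w'(1) \<open>0 \<le> a\<close> \<open>0 \<le> b\<close> by (intro add_mono mult_left_mono) (simp_all add: W_def)
      also have "\<dots> = M"
        using \<open>a + b = 1\<close> by (metis distrib_right mult_1)
      finally have "w'' \<in> W"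
        using w(1) w'(1) by (simp add: W_def w''_def)
      moreover have "a *\<^sub>R x + b *\<^sub>R y = L w''"
        by (simp add: w(2) w'(2) L_def w''_def scaleR_sum_right scaleR_add_left sum.distrib)
      ultimately show "a *\<^sub>R x + b *\<^sub>R y \<in> L ` W"
        by blast
    qed
  qed
  then obtain w where "w \<in> W" "x = L w"
    using assms(1) by blast
  then show ?thesis
    by (intro exI[of _ w]) (simp add: W_def L_def)
qed

lemma orthogonal_projection_onto_span:
  assumes "finite E" "orthonormal E"
  shows "\<exists>t\<in>span E. \<forall>z\<in>span E. inner z t = inner z g"
proof
  show "(\<Sum>e\<in>E. inner e g *\<^sub>R e) \<in> span E"
    by (intro span_sum span_scale span_base)
  show "\<forall>z\<in>span E. inner z (\<Sum>e\<in>E. inner e g *\<^sub>R e) = inner z g"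
  proof
    fix z
    assume "z \<in> span E"
    have "inner z (\<Sum>e\<in>E. inner e g *\<^sub>R e) = inner (\<Sum>e\<in>E. inner e z *\<^sub>R e) g"
      by (simp add: inner_sum_left inner_sum_right inner_commute mult.commute)
    also have "\<dots> = inner z g"
      using orthonormal_expansion[OF assms \<open>z \<in> span E\<close>] by simp
    finally show "inner z (\<Sum>e\<in>E. inner e g *\<^sub>R e) = inner z g" .
  qed
qed

context c0_operator
begin

text \<open>The orthogonal projection of \<open>A\<^sup>*\<delta>\<^sub>j\<close> onto \<open>span E\<close>.\<close>

definition adj_unit_proj :: "'h set \<Rightarrow> nat \<Rightarrow> 'h" where
  "adj_unit_proj E j = (\<Sum>e\<in>E. A e j *\<^sub>R e)"

lemma adj_unit_proj_in_span: "adj_unit_proj E j \<in> span E"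
  unfolding adj_unit_proj_def by (intro span_sum span_scale span_base)

lemma inner_adj_unit_proj:
  assumes "finite E" "orthonormal E" "z \<in> span E"
  shows "inner z (adj_unit_proj E j) = A z j"
  using A_orthonormal_expansion[OF assms, of j]
  by (simp add: adj_unit_proj_def inner_sum_right inner_commute mult.commute)

text \<open>A finite-dimensional Hahn--Banach step: if \<open>t\<close> were not in the hull, a separating \<open>c\<close> would satisfy
  \<open>M |(Ac)\<^sub>j| < \<langle>c, t\<rangle>\<close> on the head \<open>j < N\<close>, while the tail of \<open>Ac\<close> is at most half its sup norm;
  together \<open>M \<parallel>Ac\<parallel>\<^sub>\<infinity> \<le> \<langle>c, t\<rangle> \<le> M\<^sub>0 \<parallel>Ac\<parallel>\<^sub>\<infinity>\<close>, contradicting \<open>M\<^sub>0 < M\<close>.\<close>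

lemma mem_convex_hull_signed_adj_unit_proj:
  assumes E: "finite E" "orthonormal E"
    and inj: "\<And>z. z \<in> span E \<Longrightarrow> A z = (\<lambda>_. 0) \<Longrightarrow> z = 0"
    and tail: "\<And>z i. z \<in> span E \<Longrightarrow> i \<ge> N \<Longrightarrow> \<bar>A z i\<bar> \<le> supnorm (A z) / 2" and "0 < N"
    and t: "t \<in> span E" "\<And>z. z \<in> span E \<Longrightarrow> inner z t \<le> M0 * supnorm (A z)"
    and M: "M0 < M" "0 < M"
  shows "t \<in> convex hull ((\<lambda>(s, j). (s * M) *\<^sub>R adj_unit_proj E j) ` ({-1, 1} \<times> {..<N}))"
proof (rule ccontr)
  define P where "P = (\<lambda>(s, j). (s * M) *\<^sub>R adj_unit_proj E j) ` ({-1 :: real, 1} \<times> {..<N})"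
  assume "t \<notin> convex hull ((\<lambda>(s, j). (s * M) *\<^sub>R adj_unit_proj E j) ` ({-1, 1} \<times> {..<N}))"
  then have "t \<notin> convex hull P"
    by (simp add: P_def)
  moreover have "finite P" "P \<noteq> {}"
    using \<open>0 < N\<close> by (auto simp: P_def)
  ultimately have "\<exists>c\<in>span (insert t P). c \<noteq> 0 \<and> (\<forall>x\<in>P. inner c x < inner c t)"
    by (rule separation_convex_hull_finite[rotated 2])
  then obtain c where c: "c \<in> span (insert t P)" "c \<noteq> 0" "\<And>x. x \<in> P \<Longrightarrow> inner c x < inner c t"
    by blast
  have "insert t P \<subseteq> span E"
    using t(1) adj_unit_proj_in_span by (auto simp: P_def intro: span_scale)
  then have c_span: "c \<in> span E"
    using c(1) span_minimal[OF _ subspace_span] by blast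
  define s where "s = supnorm (A c)"
  have "0 < s"
    using inj[OF c_span] c(2) supnorm_A_eq_0_iff[of c] supnorm_A_nonneg[of c] by (auto simp: s_def)
  have head: "M * \<bar>A c j\<bar> < inner c t" if "j < N" for j
  proof -
    have "\<sigma> * M * A c j < inner c t" if "\<sigma> \<in> {-1, 1}" for \<sigma>
    proof -
      have "(\<sigma> * M) *\<^sub>R adj_unit_proj E j \<in> P"
        unfolding P_def using that \<open>j < N\<close> by (intro image_eqI[of _ _ "(\<sigma>, j)"]) auto
      from c(3)[OF this] show ?thesis
        using inner_adj_unit_proj[OF E c_span, of j] by simp
    qed
    from this[of 1] this[of "-1"] have "M * A c j < inner c t" "- (M * A c j) < inner c t"
      by simp_all
    then show ?thesis
      using M(2) by (cases "A c j \<ge> 0") (simp_all add: abs_of_neg)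
  qed
  have "\<bar>A c j\<bar> \<le> max (inner c t / M) (s / 2)" for j
  proof (cases "j < N")
    case True
    then have "M * \<bar>A c j\<bar> \<le> inner c t"
      using head less_imp_le by blast
    then have "\<bar>A c j\<bar> \<le> inner c t / M"
      using M(2) by (simp add: pos_le_divide_eq mult.commute)
    then show ?thesis
      by simp
  next
    case False
    then show ?thesis
      using tail[OF c_span, of j] by (simp add: s_def)
  qed
  then have "s \<le> max (inner c t / M) (s / 2)"
    unfolding s_def by (rule supnorm_le)
  then have "s \<le> inner c t / M"
    using \<open>0 < s\<close> by (auto simp: le_max_iff_disj)
  then have "M * s \<le> inner c t"
    using M(2) by (simp add: field_simps)
  also have "\<dots> \<le> M0 * s"
    using t(2)[OF c_span] by (simp add: s_def)
  finally show False
    using M(1) \<open>0 < s\<close> by simp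
qed

lemma ell1_representer_on_span:
  assumes E: "finite E" "orthonormal E"
    and inj: "\<And>z. z \<in> span E \<Longrightarrow> A z = (\<lambda>_. 0) \<Longrightarrow> z = 0"
    and dominated: "\<And>z. z \<in> span E \<Longrightarrow> \<bar>inner z g\<bar> \<le> M0 * supnorm (A z)"
    and M: "0 \<le> M0" "M0 < M"
  shows "\<exists>w\<in>ell1. l1norm w \<le> M \<and> (\<forall>z\<in>span E. (\<Sum>i. w i * A z i) = inner z g)"
proof -
  obtain c where "0 \<le> c" "\<And>z. z \<in> span E \<Longrightarrow> norm z \<le> c * supnorm (A z)"
    using norm_le_supnorm_on_span[OF E inj] by blast
  then obtain N where tail: "\<And>z i. z \<in> span E \<Longrightarrow> i \<ge> N \<Longrightarrow> \<bar>A z i\<bar> \<le> supnorm (A z) / 2"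
    using uniformly_small_tail_on_span[OF E] by blast
  then have tail': "\<And>z i. z \<in> span E \<Longrightarrow> i \<ge> Suc N \<Longrightarrow> \<bar>A z i\<bar> \<le> supnorm (A z) / 2"
    by simp
  obtain t where t: "t \<in> span E" "\<And>z. z \<in> span E \<Longrightarrow> inner z t = inner z g"
    using orthogonal_projection_onto_span[OF E] by blast
  have "t \<in> convex hull ((\<lambda>(s, j). (s * M) *\<^sub>R adj_unit_proj E j) ` ({-1, 1} \<times> {..<Suc N}))"
  proof (rule mem_convex_hull_signed_adj_unit_proj[OF E inj tail' _ t(1) _ M(2)])
    show "inner z t \<le> M0 * supnorm (A z)" if "z \<in> span E" for z
      using t(2)[OF that] dominated[OF that] by simp
  qed (use M in auto)
  moreover have "0 \<le> M"
    using M by linarith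
  ultimately obtain w where w: "\<And>j. j \<ge> Suc N \<Longrightarrow> w j = 0" "(\<Sum>j<Suc N. \<bar>w j\<bar>) \<le> M"
    and t_eq: "t = (\<Sum>j<Suc N. w j *\<^sub>R adj_unit_proj E j)"
    using convex_hull_signed_points by blast
  show ?thesis
  proof (intro bexI conjI ballI)
    show "w \<in> ell1"
      by (rule finitely_supported_ell1(1)[OF w(1)])
    show "l1norm w \<le> M"
      using finitely_supported_ell1(2)[OF w(1)] w(2) by simp
    fix z
    assume "z \<in> span E"
    have "inner z t = (\<Sum>j<Suc N. w j * A z j)"
      unfolding t_eq inner_sum_right inner_scaleR_right inner_adj_unit_proj[OF E \<open>z \<in> span E\<close>] ..
    then show "(\<Sum>i. w i * A z i) = inner z g"
      using finitely_supported_ell1(3)[OF w(1)] t(2)[OF \<open>z \<in> span E\<close>] by simp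
  qed
qed

lemma inner_le_kappa_supnorm:
  assumes "norm z \<le> \<kappa> * supnorm (A z)" "norm h \<le> \<delta>"
  shows "\<bar>inner z h\<bar> \<le> \<bar>\<delta> * \<kappa>\<bar> * supnorm (A z)"
proof -
  have "0 \<le> \<kappa> * supnorm (A z)"
    using assms(1) norm_ge_zero[of z] by linarith
  have "\<bar>inner z h\<bar> \<le> norm z * norm h"
    by (rule Cauchy_Schwarz_ineq2)
  also have "\<dots> \<le> (\<kappa> * supnorm (A z)) * \<delta>"
    using assms \<open>0 \<le> \<kappa> * supnorm (A z)\<close> by (intro mult_mono) simp_all
  also have "\<dots> = (\<delta> * \<kappa>) * supnorm (A z)"
    by (simp add: algebra_simps)
  also have "\<dots> \<le> \<bar>\<delta> * \<kappa>\<bar> * supnorm (A z)"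
    by (rule mult_right_mono[OF abs_ge_self supnorm_A_nonneg])
  finally show ?thesis .
qed

end

section \<open>Minimal-norm solutions of the projected problems\<close>

context hilbert_c0_operator
begin

lemma min_l1_sol_pairing:
  assumes "min_l1_sol A S g u" "z \<in> S"
  shows "(\<Sum>i. u i * A z i) = inner z g"
  using assms inner_adj[of u z] by (simp add: min_l1_sol_def inner_commute)

lemma min_l1_sol_le_solution:
  assumes "min_l1_sol A S f u" "v \<in> ell1" "adj A v = f"
  shows "l1norm u \<le> l1norm v"
  using assms unfolding min_l1_sol_def by blast

text \<open>Perturbing the data by \<open>g - f\<close> costs at most \<open>M\<close> in the minimal \<open>\<ell>\<^sup>1\<close>-norm: an exact solution plus
  an \<open>\<ell>\<^sup>1\<close> representer of \<open>g - f\<close> on the trial space is feasible.\<close>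

lemma min_l1_sol_l1norm_le:
  assumes E: "finite E" "orthonormal E"
    and inj: "\<And>z. z \<in> span E \<Longrightarrow> A z = (\<lambda>_. 0) \<Longrightarrow> z = 0"
    and u: "min_l1_sol A (span E) g u" and v: "v \<in> ell1" "adj A v = f"
    and dominated: "\<And>z. z \<in> span E \<Longrightarrow> \<bar>inner z (g - f)\<bar> \<le> M0 * supnorm (A z)"
    and M: "0 \<le> M0" "M0 < M"
  shows "l1norm u \<le> l1norm v + M"
proof -
  obtain w where w: "w \<in> ell1" "l1norm w \<le> M" "\<And>z. z \<in> span E \<Longrightarrow> (\<Sum>i. w i * A z i) = inner z (g - f)"
    using ell1_representer_on_span[OF E inj dominated M] by blast
  have vw: "(\<lambda>i. v i + w i) \<in> ell1"
    by (rule ell1_add[OF v(1) w(1)])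
  have "inner z (adj A (\<lambda>i. v i + w i)) = inner z g" if "z \<in> span E" for z
  proof -
    have "inner z (adj A (\<lambda>i. v i + w i)) = (\<Sum>i. v i * A z i + w i * A z i)"
      using inner_adj[OF vw, of z] by (simp add: inner_commute distrib_right)
    also have "\<dots> = (\<Sum>i. v i * A z i) + (\<Sum>i. w i * A z i)"
      by (rule suminf_add[OF ell1_pairing(1)[OF v(1) abs_A_le_supnorm]
            ell1_pairing(1)[OF w(1) abs_A_le_supnorm], symmetric])
    also have "(\<Sum>i. v i * A z i) = inner z f"
      using inner_adj[OF v(1), of z] v(2) by (simp add: inner_commute)
    finally show ?thesis
      using w(3)[OF that] by (simp add: inner_diff_right)
  qed
  then have "l1norm u \<le> l1norm (\<lambda>i. v i + w i)"
    using u vw unfolding min_l1_sol_def by blast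
  also have "\<dots> \<le> l1norm v + l1norm w"
    by (rule l1norm_le_if_abs_le[OF v(1) w(1)]) simp
  finally show ?thesis
    using w(2) by linarith
qed

lemma exact_minimizers_subseq_converge:
  assumes S: "\<And>n. subspace (S n)"
    and solvable: "\<exists>u\<in>ell1. adj A u = f"
    and approx: "\<And>z. (\<lambda>n. INF x\<in>S n. supnorm (A (z - x))) \<longlonglongrightarrow> 0"
    and sol: "\<And>n. min_l1_sol A (S n) f (U n)"
  shows "\<exists>r u. strict_mono r \<and> u \<in> ell1 \<and> adj A u = f \<and> (\<lambda>k. l1norm (\<lambda>i. U (r k) i - u i)) \<longlonglongrightarrow> 0"
proof -
  obtain u0 where u0: "u0 \<in> ell1" "adj A u0 = f"
    using solvable by blast
  have U: "U n \<in> ell1" for n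
    using sol unfolding min_l1_sol_def by blast
  have minimal: "l1norm (U n) \<le> l1norm v" if "v \<in> ell1" "adj A v = f" for n v
    by (rule min_l1_sol_le_solution[OF sol that])
  show ?thesis
  proof (rule l1_convergent_subseq_to_solution[OF U minimal[OF u0]])
    show "(\<lambda>n. \<Sum>i. U n i * A z i) \<longlonglongrightarrow> inner z f" for z
    proof (rule pairing_tendsto_if_consistent[where \<epsilon> = "\<lambda>_. 0", OF U minimal[OF u0] u0 _ approx])
      show "S n \<noteq> {}" for n
        using subspace_0[OF S] by blast
    qed (simp_all add: min_l1_sol_pairing[OF sol])
    show "\<exists>K. \<forall>n\<ge>K. l1norm (U n) \<le> l1norm v + \<epsilon>" if "v \<in> ell1" "adj A v = f" "\<epsilon> > 0" for v \<epsilon>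
    proof -
      have "l1norm (U n) \<le> l1norm v + \<epsilon>" for n
        using minimal[OF that(1,2), of n] that(3) by linarith
      then show ?thesis
        by blast
    qed
  qed
qed

text \<open>By the definition of \<open>\<kappa>\<close>, the data error \<open>\<delta>\<^sub>m\<close> becomes a consistency error \<open>\<delta>\<^sub>m \<kappa>(T\<^sub>m)\<close>
  relative to \<open>\<parallel>A\<cdot>\<parallel>\<^sub>\<infinity>\<close>.  The spaces must be nonzero, since \<open>dim\<close> is also \<open>0\<close> on
  infinite-dimensional spaces.\<close>

lemma perturbed_minimizers_subseq_converge:
  assumes T: "\<And>m. subspace (T m)" "\<And>m. dim (T m) \<noteq> 0"
    and inj: "\<And>m z. z \<in> T m \<Longrightarrow> A z = (\<lambda>_. 0) \<Longrightarrow> z = 0"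
    and solvable: "\<exists>u\<in>ell1. adj A u = f"
    and approx: "\<And>z. (\<lambda>m. INF x\<in>T m. supnorm (A (z - x))) \<longlonglongrightarrow> 0"
    and data: "\<And>m. norm (g m - f) \<le> \<delta> m" and \<delta>\<kappa>: "(\<lambda>m. \<delta> m * kappa A (T m)) \<longlonglongrightarrow> 0"
    and sol: "\<And>m. min_l1_sol A (T m) (g m) (U m)"
  shows "\<exists>r u. strict_mono r \<and> u \<in> ell1 \<and> adj A u = f \<and> (\<lambda>k. l1norm (\<lambda>i. U (r k) i - u i)) \<longlonglongrightarrow> 0"
proof -
  obtain u0 where u0: "u0 \<in> ell1" "adj A u0 = f"
    using solvable by blast
  obtain E where E: "\<And>m. finite (E m)" "\<And>m. orthonormal (E m)" "\<And>m. span (E m) = T m"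
    using subspace_eq_span_orthonormal[OF T] by metis
  have inj_span: "z = 0" if "z \<in> span (E m)" "A z = (\<lambda>_. 0)" for z m
    using inj that E(3) by metis
  have \<kappa>: "norm z \<le> kappa A (T m) * supnorm (A z)" if "z \<in> T m" for z m
  proof -
    obtain c where "0 \<le> c" "\<forall>z\<in>span (E m). norm z \<le> c * supnorm (A z)"
      using norm_le_supnorm_on_span[OF E(1,2) inj_span[of _ m]] by blast
    then have c: "norm z \<le> c * supnorm (A z)" if "z \<in> T m" for z
      using that E(3) by blast
    show ?thesis
      by (rule norm_le_kappa_mult_supnorm[OF c inj that])
  qed
  define \<epsilon> where "\<epsilon> m = \<bar>\<delta> m * kappa A (T m)\<bar>" for m
  have \<epsilon>: "\<epsilon> \<longlonglongrightarrow> 0"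
    unfolding \<epsilon>_def by (rule tendsto_rabs_zero[OF \<delta>\<kappa>])
  have err: "\<bar>inner z (g m - f)\<bar> \<le> \<epsilon> m * supnorm (A z)" if "z \<in> T m" for z m
    unfolding \<epsilon>_def by (rule inner_le_kappa_supnorm[OF \<kappa>[OF that] data])
  have U: "U m \<in> ell1" for m
    using sol unfolding min_l1_sol_def by blast
  have bound: "l1norm (U m) \<le> l1norm v + (\<epsilon> m + 1 / Suc m)" if "v \<in> ell1" "adj A v = f" for v m
  proof (rule min_l1_sol_l1norm_le[OF E(1,2) inj_span _ that])
    show "min_l1_sol A (span (E m)) (g m) (U m)"
      using sol[of m] E(3)[of m] by simp
    show "\<bar>inner z (g m - f)\<bar> \<le> \<epsilon> m * supnorm (A z)" if "z \<in> span (E m)" for z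
      using err[of z m] that E(3)[of m] by simp
  qed (simp_all add: \<epsilon>_def)
  have lim: "(\<lambda>m. \<epsilon> m + 1 / Suc m) \<longlonglongrightarrow> 0"
    using tendsto_add[OF \<epsilon> LIMSEQ_Suc[OF lim_1_over_n]] by simp
  then have "Bseq (\<lambda>m. \<epsilon> m + 1 / Suc m)"
    by (rule convergent_imp_Bseq[OF convergentI])
  then obtain B where B: "\<And>m. \<bar>\<epsilon> m + 1 / Suc m\<bar> \<le> B"
    unfolding Bseq_def by auto
  show ?thesis
  proof (rule l1_convergent_subseq_to_solution[OF U])
    show bounded: "l1norm (U m) \<le> l1norm u0 + B" for m
      using bound[OF u0, of m] B[of m] by linarith
    show "(\<lambda>m. \<Sum>i. U m i * A z i) \<longlonglongrightarrow> inner z f" for z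
    proof (rule pairing_tendsto_if_consistent[OF U bounded u0 _ approx _ \<epsilon>])
      show "T m \<noteq> {}" for m
        using subspace_0[OF T(1)] by blast
      show "0 \<le> \<epsilon> m" for m
        by (simp add: \<epsilon>_def)
      show "\<bar>(\<Sum>i. U m i * A x i) - inner x f\<bar> \<le> \<epsilon> m * supnorm (A x)" if "x \<in> T m" for m x
        using err[OF that] min_l1_sol_pairing[OF sol that] by (simp add: inner_diff_right)
    qed
    show "\<exists>K. \<forall>m\<ge>K. l1norm (U m) \<le> l1norm v + e" if "v \<in> ell1" "adj A v = f" "e > 0" for v e
    proof -
      obtain K where K: "\<And>m. m \<ge> K \<Longrightarrow> \<bar>\<epsilon> m + 1 / Suc m\<bar> < e"
        using LIMSEQ_D[OF lim \<open>e > 0\<close>] by auto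
      have "l1norm (U m) \<le> l1norm v + e" if "m \<ge> K" for m
        using bound[OF \<open>v \<in> ell1\<close> \<open>adj A v = f\<close>, of m] K[OF that] by linarith
      then show ?thesis
        by blast
    qed
  qed
qed

end

lemma l1_subseq_limit_shift:
  fixes U :: "nat \<Rightarrow> nat \<Rightarrow> real"
  assumes "\<exists>r u. strict_mono r \<and> u \<in> ell1 \<and> P u \<and> (\<lambda>k. l1norm (\<lambda>i. U (r k + K) i - u i)) \<longlonglongrightarrow> 0"
  shows "\<exists>r u. strict_mono r \<and> u \<in> ell1 \<and> P u \<and> (\<lambda>k. l1norm (\<lambda>i. U (r k) i - u i)) \<longlonglongrightarrow> 0"
proof -
  obtain r u where "strict_mono r" "u \<in> ell1" "P u" "(\<lambda>k. l1norm (\<lambda>i. U (r k + K) i - u i)) \<longlonglongrightarrow> 0"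
    using assms by blast
  moreover have "strict_mono (\<lambda>k. r k + K)"
    using \<open>strict_mono r\<close> by (auto simp: strict_mono_def)
  ultimately show ?thesis
    by blast
qed

lemma (in hilbert_c0_operator) noisy_minimizers_subseq_converge:
  assumes S: "\<And>k. subspace (S k)" "\<And>k. dim (S k) = k"
    and inj: "\<And>k z. z \<in> S k \<Longrightarrow> A z = (\<lambda>_. 0) \<Longrightarrow> z = 0"
    and solvable: "\<exists>u\<in>ell1. adj A u = f"
    and approx: "\<And>z. (\<lambda>k. INF x\<in>S k. supnorm (A (z - x))) \<longlonglongrightarrow> 0"
    and n_lim: "filterlim n at_top (at_right 0)"
    and \<delta>\<kappa>: "((\<lambda>d. d * kappa A (S (n d))) \<longlongrightarrow> 0) (at_right 0)"
    and \<delta>: "\<And>m. \<delta> m > 0" "\<delta> \<longlonglongrightarrow> 0" and data: "\<And>m. norm (g m - f) \<le> \<delta> m"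
    and sol: "\<And>m. min_l1_sol A (S (n (\<delta> m))) (g m) (U m)"
  shows "\<exists>r u. strict_mono r \<and> u \<in> ell1 \<and> adj A u = f \<and> (\<lambda>k. l1norm (\<lambda>i. U (r k) i - u i)) \<longlonglongrightarrow> 0"
proof -
  have \<delta>_right: "filterlim \<delta> (at_right 0) sequentially"
    using \<delta> by (intro tendsto_imp_filterlim_at_right) auto
  have "filterlim (\<lambda>m. n (\<delta> m)) at_top sequentially"
    by (rule filterlim_compose[OF n_lim \<delta>_right])
  then obtain K where K: "\<And>m. m \<ge> K \<Longrightarrow> n (\<delta> m) \<ge> 1"
    unfolding filterlim_at_top eventually_sequentially by blast
  have "\<exists>r u. strict_mono r \<and> u \<in> ell1 \<and> adj A u = f \<and> (\<lambda>k. l1norm (\<lambda>i. U (r k + K) i - u i)) \<longlonglongrightarrow> 0"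
  proof (rule perturbed_minimizers_subseq_converge[where T = "\<lambda>m. S (n (\<delta> (m + K)))"])
    show "dim (S (n (\<delta> (m + K)))) \<noteq> 0" for m
      using K[of "m + K"] S(2) by simp
    show "(\<lambda>m. INF x\<in>S (n (\<delta> (m + K))). supnorm (A (z - x))) \<longlonglongrightarrow> 0" for z
      using LIMSEQ_ignore_initial_segment[OF filterlim_compose[OF approx[of z] \<open>filterlim (\<lambda>m. n (\<delta> m)) at_top sequentially\<close>], of K]
      by simp
    show "(\<lambda>m. \<delta> (m + K) * kappa A (S (n (\<delta> (m + K))))) \<longlonglongrightarrow> 0"
      using LIMSEQ_ignore_initial_segment[OF filterlim_compose[OF \<delta>\<kappa> \<delta>_right], of K] by simp
  qed (use S inj solvable data sol in auto)
  then show ?thesis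
    by (rule l1_subseq_limit_shift)
qed

theorem theorem1:
  fixes A :: "'h::{real_inner,complete_space} \<Rightarrow> nat \<Rightarrow> real"
    and Hs :: "nat \<Rightarrow> 'h set"
    and f :: 'h
  assumes A_bl: "bounded_linear_c0 A"
    and Hs_sub: "\<And>n. subspace (Hs n)"
    and Hs_dim: "\<And>n. dim (Hs n) = n"
    and proj_conv: "\<And>v. (\<lambda>n. orth_proj (Hs n) v) \<longlonglongrightarrow> v"
    and null_trivial: "\<And>n z. z \<in> Hs n \<Longrightarrow> A z = (\<lambda>_. 0) \<Longrightarrow> z = 0"
    and solvable: "\<exists>u\<in>ell1. adj A u = f"
    and approx: "\<And>z. (\<lambda>n. INF zn\<in>Hs n. supnorm (A (z - zn))) \<longlonglongrightarrow> 0"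
  shows
    "(\<forall>useq :: nat \<Rightarrow> nat \<Rightarrow> real.
        (\<forall>n. min_l1_sol A (Hs n) f (useq n)) \<longrightarrow>
        (\<exists>r u. strict_mono r \<and> u \<in> ell1 \<and> adj A u = f \<and>
               (\<lambda>k. l1norm (\<lambda>i. useq (r k) i - u i)) \<longlonglongrightarrow> 0))
     \<and>
     (\<forall>(nAP :: real \<Rightarrow> nat) (\<delta> :: nat \<Rightarrow> real) (fd :: nat \<Rightarrow> 'h) (um :: nat \<Rightarrow> nat \<Rightarrow> real).
        filterlim nAP at_top (at_right 0) \<longrightarrow>
        ((\<lambda>d. d * kappa A (Hs (nAP d))) \<longlongrightarrow> 0) (at_right 0) \<longrightarrow>
        (\<forall>m. \<delta> m > 0) \<longrightarrow> \<delta> \<longlonglongrightarrow> 0 \<longrightarrow>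
        (\<forall>m. norm (fd m - f) \<le> \<delta> m) \<longrightarrow>
        (\<forall>m. min_l1_sol A (Hs (nAP (\<delta> m))) (fd m) (um m)) \<longrightarrow>
        (\<exists>r u. strict_mono r \<and> u \<in> ell1 \<and> adj A u = f \<and>
               (\<lambda>l. l1norm (\<lambda>i. um (r l) i - u i)) \<longlonglongrightarrow> 0))"
proof -
  interpret hilbert_c0_operator A
    using A_bl by unfold_locales
  show ?thesis
  proof (intro conjI allI impI)
    fix useq :: "nat \<Rightarrow> nat \<Rightarrow> real"
    assume "\<forall>n. min_l1_sol A (Hs n) f (useq n)"
    then show "\<exists>r u. strict_mono r \<and> u \<in> ell1 \<and> adj A u = f \<and> (\<lambda>k. l1norm (\<lambda>i. useq (r k) i - u i)) \<longlonglongrightarrow> 0"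
      using exact_minimizers_subseq_converge[OF Hs_sub solvable approx] by blast
  next
    fix nAP :: "real \<Rightarrow> nat" and \<delta> :: "nat \<Rightarrow> real" and fd :: "nat \<Rightarrow> 'h" and um :: "nat \<Rightarrow> nat \<Rightarrow> real"
    assume n_lim: "filterlim nAP at_top (at_right 0)"
      and \<delta>\<kappa>: "((\<lambda>d. d * kappa A (Hs (nAP d))) \<longlongrightarrow> 0) (at_right 0)"
      and \<delta>: "\<forall>m. \<delta> m > 0" "\<delta> \<longlonglongrightarrow> 0" and data: "\<forall>m. norm (fd m - f) \<le> \<delta> m"
      and sol: "\<forall>m. min_l1_sol A (Hs (nAP (\<delta> m))) (fd m) (um m)"
    show "\<exists>r u. strict_mono r \<and> u \<in> ell1 \<and> adj A u = f \<and> (\<lambda>l. l1norm (\<lambda>i. um (r l) i - u i)) \<longlonglongrightarrow> 0"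
      using noisy_minimizers_subseq_converge[OF Hs_sub Hs_dim null_trivial solvable approx n_lim \<delta>\<kappa>
          \<delta>(1)[rule_format] \<delta>(2) data[rule_format] sol[rule_format]] .
  qed
qed

end
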